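(* Let $k\ge 3$ be an integer and let $\Gamma$ be any graph in the family $M_{0,1,2,\ldots,k-1}$ (defined in the context). Then $\Gamma$ has a Fulkerson-cover.
   Context: All graphs are finite. A Fulkerson-cover of a cubic graph is a collection of six perfect matchings such that every edge belongs to exactly two of them. A cubic graph is cyclically 4-edge-connected if at least 4 edges must be removed to disconnect it into two components each containing a circuit. The family $M_{0,1,\ldots,k-1}$ ($k\ge 2$): Let $G_0,G_1,\ldots,G_{k-1}$ be bridgeless, cyclically 4-edge-connected cubic graphs, each having a Fulkerson-cover. In each $G_i$ choose an edge $x_iy_i$, let $x_i^0,x_i^1$ be the two neighbours of $x_i$ other than $y_i$, let $y_i^0,y_i^1$ be the two neighbours of $y_i$ other than $x_i$, and let $H_i=G_i\setminus\{x_i,y_i\}$ (delete the two vertices and their incident edges). The graph $\{G;G_0,\ldots,G_{k-1}\}$ is obtained from the disjoint union of $H_0,\ldots,H_{k-1}$ by adding new vertices $a_j,b_j,c_j$ for $0\le j\le k-1$ and $v_0,\ldots,v_{k-3}$ (none if $k=2$), and the following edges, with indices of $x$ taken modulo $k$: - for each $0\le j\le k-1$: $a_jy_j^0$, $a_jx_{j+1}^0$, $b_jy_j^1$, $b_jx_{j+1}^1$, $a_jc_j$, $b_jc_j$; - the edges of the path $c_1v_0v_1\cdots v_{k-3}c_0$ (for $k=2$ this is the single edge $c_0c_1$); - for each $2\le i\le k-1$: the edge $c_iv_{i-2}$. (Equivalently, it is built recursively: for $k=2$ take the graph above with edge $c_0c_1$; for $i=3,\ldots,k$, add $H_{i-1}$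 and $a_{i-1},b_{i-1},c_{i-1}$, subdivide the edge at $c_0$ not of the form $a_0c_0,b_0c_0$ by a new vertex $v_{i-3}$, join $c_{i-1}$ to $a_{i-1},b_{i-1},v_{i-3}$, make $a_{i-1}$ adjacent to $x_0^0,y_{i-1}^0$, $b_{i-1}$ adjacent to $x_0^1,y_{i-1}^1$, and replace the edges $a_{i-2}x_0^0$, $b_{i-2}x_0^1$ by $a_{i-2}x_{i-1}^0$, $b_{i-2}x_{i-1}^1$.) $M_{0,1,\ldots,k-1}$ denotes the set of all graphs obtained this way, over all such choices of $G_i$, edges $x_iy_i$ and labelings of neighbours. *)

theory Defs
  imports Main
begin

definition graph :: "'a set \<Rightarrow> 'a set set \<Rightarrow> bool" where
  "graph V E \<longleftrightarrow> finite V \<and> (\<forall>e\<in>E. \<exists>u v. u \<noteq> v \<and> e = {u, v} \<and> u \<in> V \<and> v \<in> V)"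

definition degree :: "'a set set \<Rightarrow> 'a \<Rightarrow> nat" where
  "degree E v = card {e\<in>E. v \<in> e}"

definition cubic :: "'a set \<Rightarrow> 'a set set \<Rightarrow> bool" where
  "cubic V E \<longleftrightarrow> graph V E \<and> (\<forall>v\<in>V. degree E v = 3)"

definition adj :: "'a set set \<Rightarrow> 'a \<Rightarrow> 'a \<Rightarrow> bool" where
  "adj E u v \<longleftrightarrow> {u, v} \<in> E \<and> u \<noteq> v"

definition reach :: "'a set set \<Rightarrow> 'a \<Rightarrow> 'a \<Rightarrow> bool" where
  "reach E = (adj E)\<^sup>*\<^sup>*"

definition bridgeless :: "'a set \<Rightarrow> 'a set set \<Rightarrow> bool" where
  "bridgeless V E \<longleftrightarrow> (\<forall>u v. {u, v} \<in> E \<longrightarrow> reach (E - {{u, v}}) u v)"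

definition has_circuit :: "'a set \<Rightarrow> 'a set set \<Rightarrow> bool" where
  "has_circuit V E \<longleftrightarrow> (\<exists>vs. length vs \<ge> 3 \<and> distinct vs \<and> set vs \<subseteq> V \<and>
      (\<forall>i<length vs. {vs ! i, vs ! ((i + 1) mod length vs)} \<in> E))"

definition induced_edges :: "'a set set \<Rightarrow> 'a set \<Rightarrow> 'a set set" where
  "induced_edges E S = {e\<in>E. e \<subseteq> S}"

definition cut_edges :: "'a set set \<Rightarrow> 'a set \<Rightarrow> 'a set set" where
  "cut_edges E S = {e\<in>E. e \<inter> S \<noteq> {} \<and> \<not> e \<subseteq> S}"

definition cyc4_connected :: "'a set \<Rightarrow> 'a set set \<Rightarrow> bool" where
  "cyc4_connected V E \<longleftrightarrow>
     (\<forall>S\<subseteq>V. has_circuit S (induced_edges E S) \<and> has_circuit (V - S) (induced_edges E (V - S))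
        \<longrightarrow> card (cut_edges E S) \<ge> 4)"

definition perfect_matching :: "'a set \<Rightarrow> 'a set set \<Rightarrow> 'a set set \<Rightarrow> bool" where
  "perfect_matching V E M \<longleftrightarrow> M \<subseteq> E \<and> (\<forall>v\<in>V. \<exists>!e. e \<in> M \<and> v \<in> e)"

definition fulkerson_cover :: "'a set \<Rightarrow> 'a set set \<Rightarrow> 'a set set list \<Rightarrow> bool" where
  "fulkerson_cover V E Ms \<longleftrightarrow> length Ms = 6 \<and> (\<forall>M\<in>set Ms. perfect_matching V E M) \<and>
     (\<forall>e\<in>E. length (filter (\<lambda>M. e \<in> M) Ms) = 2)"

definition has_fulkerson_cover :: "'a set \<Rightarrow> 'a set set \<Rightarrow> bool" where
  "has_fulkerson_cover V E \<longleftrightarrow> (\<exists>Ms. fulkerson_cover V E Ms)"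

text \<open>Vertices: Old i u is the copy of vertex u of H_i; Av j, Bv j, Cv j are a_j, b_j, c_j;
  Pv i is v_i.\<close>
datatype 'a mvert = Old nat 'a | Av nat | Bv nat | Cv nat | Pv nat

definition M_vertices :: "nat \<Rightarrow> (nat \<Rightarrow> 'a set) \<Rightarrow> (nat \<Rightarrow> 'a) \<Rightarrow> (nat \<Rightarrow> 'a) \<Rightarrow> 'a mvert set" where
  "M_vertices k V x y =
     (\<Union>i<k. Old i ` (V i - {x i, y i})) \<union> Av ` {..<k} \<union> Bv ` {..<k} \<union> Cv ` {..<k}
     \<union> Pv ` {..<k - 2}"

definition M_path :: "nat \<Rightarrow> 'a mvert list" where
  "M_path k = [Cv 1] @ map Pv [0..<k - 2] @ [Cv 0]"

definition M_edges ::
  "nat \<Rightarrow> (nat \<Rightarrow> 'a set set) \<Rightarrow> (nat \<Rightarrow> 'a) \<Rightarrow> (nat \<Rightarrow> 'a) \<Rightarrow>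
   (nat \<Rightarrow> 'a) \<Rightarrow> (nat \<Rightarrow> 'a) \<Rightarrow> (nat \<Rightarrow> 'a) \<Rightarrow> (nat \<Rightarrow> 'a) \<Rightarrow> 'a mvert set set" where
  "M_edges k E x y x0 x1 y0 y1 =
     (\<Union>i<k. (\<lambda>e. Old i ` e) ` {e\<in>E i. x i \<notin> e \<and> y i \<notin> e})
     \<union> (\<Union>j<k. {{Av j, Old j (y0 j)}, {Av j, Old ((j + 1) mod k) (x0 ((j + 1) mod k))},
               {Bv j, Old j (y1 j)}, {Bv j, Old ((j + 1) mod k) (x1 ((j + 1) mod k))},
               {Av j, Cv j}, {Bv j, Cv j}})
     \<union> {{M_path k ! i, M_path k ! (i + 1)} | i. i + 1 < length (M_path k :: 'a mvert list)}
     \<union> {{Cv i, Pv (i - 2)} | i. 2 \<le> i \<and> i < k}"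

definition M_ingredient :: "'a set \<Rightarrow> 'a set set \<Rightarrow> 'a \<Rightarrow> 'a \<Rightarrow> 'a \<Rightarrow> 'a \<Rightarrow> 'a \<Rightarrow> 'a \<Rightarrow> bool" where
  "M_ingredient V E x y x0 x1 y0 y1 \<longleftrightarrow>
     cubic V E \<and> bridgeless V E \<and> cyc4_connected V E \<and> has_fulkerson_cover V E \<and>
     {x, y} \<in> E \<and>
     {x, x0} \<in> E \<and> {x, x1} \<in> E \<and> x0 \<noteq> x1 \<and> x0 \<noteq> y \<and> x1 \<noteq> y \<and>
     {y, y0} \<in> E \<and> {y, y1} \<in> E \<and> y0 \<noteq> y1 \<and> y0 \<noteq> x \<and> y1 \<noteq> x"

end

theory Submission
  imports Defs "HOL-Library.Multiset"
begin

text \<open>For each of its six matchings record which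
  edge it uses at x_i and which at y_i: two matchings use x_i y_i, and each of the other four
  edges at x_i and y_i is used twice. The covers are reordered so that for all r and j the r-th
  matchings of G_j and G_(j+1) never both use their 0-edges (y_j y0_j and x_(j+1) x0_(j+1)),
  nor both their 1-edges. In the r-th glued matching, a_j is matched to the end of the 0-edge
  that is used, or to c_j if neither is, and b_j likewise with the 1-edges. This leaves c_j
  uncovered exactly when both sides avoid the removed edges, and the matchings through x_i y_i
  are placed so that these c_j are exactly those covered by one of three perfect matchings of
  the tree formed by the path c_1 v_0 ... v_(k-3) c_0 and the pendant edges c_j v_(j-2). Using
  each tree matching for two of the six indices, every edge is covered exactly twice.\<close>

lemma perfect_matching_edge_unique:
  "\<lbrakk>perfect_matching V E M; v \<in> V; e \<in> M; e' \<in> M; v \<in> e; v \<in> e'\<rbrakk> \<Longrightarrow> e = e'"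
  unfolding perfect_matching_def by blast

lemma perfect_matching_edge_exists:
  assumes "perfect_matching V E M" "v \<in> V"
  obtains e where "e \<in> M" "v \<in> e"
  using assms unfolding perfect_matching_def by blast

lemma fulkerson_coverI:
  assumes "\<And>r. r < 6 \<Longrightarrow> perfect_matching V E (N r)"
    and "\<And>e. e \<in> E \<Longrightarrow> card {r. r < 6 \<and> e \<in> N r} = 2"
  shows "fulkerson_cover V E (map N [0..<6])"
  unfolding fulkerson_cover_def
proof (intro conjI ballI)
  fix e assume "e \<in> E"
  then show "length (filter (\<lambda>M. e \<in> M) (map N [0..<6])) = 2"
    using assms(2) by (simp add: length_filter_conv_card cong: conj_cong)
qed (use assms(1) in auto)

lemma fulkerson_cover_nth:
  assumes "fulkerson_cover V E Ms"
  shows "r < 6 \<Longrightarrow> perfect_matching V E (Ms ! r)"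
    and "e \<in> E \<Longrightarrow> card {r. r < 6 \<and> e \<in> Ms ! r} = 2"
  using assms length_filter_conv_card[of "\<lambda>M. e \<in> M" Ms]
  unfolding fulkerson_cover_def by auto

lemma fulkerson_cover_reorder:
  assumes "fulkerson_cover V E Ms" "mset Ms' = mset Ms"
  shows "fulkerson_cover V E Ms'"
proof -
  have "length (filter P Ms') = length (filter P Ms)" for P
    by (metis assms(2) mset_filter size_mset)
  moreover have "length Ms' = length Ms" "set Ms' = set Ms"
    using assms(2) by (auto dest: mset_eq_length mset_eq_setD)
  ultimately show ?thesis
    using assms(1) unfolding fulkerson_cover_def by simp
qed

lemma card_neither_of_disjoint:
  assumes "\<And>r. r < n \<Longrightarrow> P r \<Longrightarrow> \<not> Q r"
  shows "card {r. r < n \<and> \<not> P r \<and> \<not> Q r} = n - card {r. r < n \<and> P r} - card {r. r < n \<and> Q r}"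
proof -
  let ?P = "{r. r < n \<and> P r}" and ?Q = "{r. r < n \<and> Q r}" and ?R = "{r. r < n \<and> \<not> P r \<and> \<not> Q r}"
  have "n = card ((?P \<union> ?Q) \<union> ?R)" by (subst card_lessThan[symmetric]) (rule arg_cong[where f = card], auto)
  also have "\<dots> = card (?P \<union> ?Q) + card ?R" by (rule card_Un_disjoint) auto
  also have "card (?P \<union> ?Q) = card ?P + card ?Q" using assms by (intro card_Un_disjoint) auto
  finally show ?thesis by simp
qed

lemma card_div_two_eq: "c < 3 \<Longrightarrow> card {r::nat. r < 6 \<and> r div 2 = c} = 2"
proof -
  assume "c < 3"
  then have "{r::nat. r < 6 \<and> r div 2 = c} = {2 * c, 2 * c + 1}" by auto
  then show ?thesis by simp
qed

lemma avoided_value_cases: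
  fixes a b :: nat
  assumes "a \<noteq> b" "a \<le> 2" "b \<le> 2"
  shows "(a \<noteq> 2 \<and> b \<noteq> 2 \<and> (a = 0 \<or> b = 0) \<and> (a = 1 \<or> b = 1))
    \<or> (a \<noteq> 1 \<and> b \<noteq> 1 \<and> (a = 0 \<or> b = 0) \<and> \<not> (a \<noteq> 2 \<and> b \<noteq> 2))
    \<or> (a \<noteq> 0 \<and> b \<noteq> 0 \<and> (a = 1 \<or> b = 1) \<and> \<not> (a \<noteq> 2 \<and> b \<noteq> 2))"
proof -
  have "a = 0 \<or> a = 1 \<or> a = 2" "b = 0 \<or> b = 1 \<or> b = 2" using assms(2,3) by auto
  then show ?thesis using assms(1) by (elim disjE) simp_all
qed

section \<open>End types of perfect matchings at a chosen edge\<close>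

text \<open>The multisets of end types (defined below) that the six matchings of a Fulkerson
  cover can have; n is the number of matchings of type (0, 0).\<close>

definition type_pattern :: "nat \<Rightarrow> (nat \<times> nat) multiset" where
  "type_pattern n = {#(2,2), (2,2)#} +
     (if n = 2 then {#(0,0), (0,0), (1,1), (1,1)#}
      else if n = 1 then {#(0,0), (1,1), (0,1), (1,0)#}
      else {#(0,1), (0,1), (1,0), (1,0)#})"

lemma size_filter_mset_eq_count_add:
  assumes "\<And>t. t \<in># T \<Longrightarrow> P t \<Longrightarrow> t = a \<or> t = b" "P a" "P b" "a \<noteq> b"
  shows "size (filter_mset P T) = count T a + count T b"
  using assms(1) by (induction T) (use assms(2-4) in auto)

lemma type_pattern_of_margins:
  fixes T :: "(nat \<times> nat) multiset"
  assumes types: "set_mset T \<subseteq> {(0,0), (0,1), (1,0), (1,1), (2,2)}"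
    and xy: "count T (2,2) = 2"
    and fst: "\<And>v. v < 2 \<Longrightarrow> size {#t \<in># T. fst t = v#} = 2"
    and snd: "\<And>v. v < 2 \<Longrightarrow> size {#t \<in># T. snd t = v#} = 2"
  shows "count T (0,0) \<le> 2 \<and> T = type_pattern (count T (0,0))"
proof -
  define n where "n = count T (0,0)"
  have "count T (0,0) + count T (0,1) = 2"
    using fst[of 0] size_filter_mset_eq_count_add[of T "\<lambda>t. fst t = 0" "(0,0)" "(0,1)"] types by force
  moreover have "count T (1,0) + count T (1,1) = 2"
    using fst[of 1] size_filter_mset_eq_count_add[of T "\<lambda>t. fst t = 1" "(1,0)" "(1,1)"] types by force
  moreover have "count T (0,0) + count T (1,0) = 2"
    using snd[of 0] size_filter_mset_eq_count_add[of T "\<lambda>t. snd t = 0" "(0,0)" "(1,0)"] types by force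
  moreover have "count T (0,1) + count T (1,1) = 2"
    using snd[of 1] size_filter_mset_eq_count_add[of T "\<lambda>t. snd t = 1" "(0,1)" "(1,1)"] types by force
  ultimately have counts: "n \<le> 2" "count T (0,0) = n" "count T (0,1) = 2 - n"
    "count T (1,0) = 2 - n" "count T (1,1) = n"
    unfolding n_def by linarith+
  have "T = type_pattern n"
  proof (rule multiset_eqI)
    fix t :: "nat \<times> nat"
    show "count T t = count (type_pattern n) t"
    proof (cases "t \<in> {(0,0), (0,1), (1,0), (1,1), (2,2)}")
      case True
      have "n = 0 \<or> n = 1 \<or> n = 2" using counts(1) by auto
      then show ?thesis using True xy counts unfolding type_pattern_def by (elim disjE) auto
    next
      case False
      then show ?thesis using types unfolding type_pattern_def by (auto simp: count_eq_zero_iff)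
    qed
  qed
  with counts show ?thesis unfolding n_def by simp
qed

lemma graph_edge_ends:
  assumes "graph V E" "{u, w} \<in> E"
  shows "u \<noteq> w \<and> u \<in> V \<and> w \<in> V"
proof -
  obtain a b where "a \<noteq> b" "{u, w} = {a, b}" "a \<in> V" "b \<in> V"
    using assms unfolding graph_def by blast
  then show ?thesis by (auto simp: doubleton_eq_iff)
qed

lemma graph_finite_edges:
  assumes "graph V E"
  shows "finite E"
proof (rule finite_subset)
  show "E \<subseteq> Pow V"
  proof
    fix e assume "e \<in> E"
    then obtain u w where "e = {u, w}" "u \<in> V" "w \<in> V" using assms unfolding graph_def by blast
    then show "e \<in> Pow V" by simp
  qed
  show "finite (Pow V)" using assms unfolding graph_def by simp
qed

lemma cubic_edges_at:
  assumes "cubic V E" "{v, a} \<in> E" "{v, b} \<in> E" "{v, c} \<in> E" "a \<noteq> b" "a \<noteq> c" "b \<noteq> c"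
  shows "{e \<in> E. v \<in> e} = {{v, a}, {v, b}, {v, c}}"
proof (rule card_subset_eq[symmetric])
  have graph: "graph V E" and deg: "\<forall>w\<in>V. degree E w = 3" using assms(1) unfolding cubic_def by auto
  have "v \<in> V" using graph_edge_ends[OF graph assms(2)] by simp
  then have "card {e \<in> E. v \<in> e} = 3" using deg unfolding degree_def by simp
  moreover have "{v, a} \<noteq> {v, b}" "{v, a} \<noteq> {v, c}" "{v, b} \<noteq> {v, c}"
    using assms(5-7) by (simp_all add: doubleton_eq_iff)
  ultimately show "card {{v, a}, {v, b}, {v, c}} = card {e \<in> E. v \<in> e}" by simp
  show "finite {e \<in> E. v \<in> e}" using graph_finite_edges[OF graph] by simp
  show "{{v, a}, {v, b}, {v, c}} \<subseteq> {e \<in> E. v \<in> e}" using assms(2-4) by simp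
qed

text \<open>The end type of a perfect matching M at the edge x y is the pair of indices of the
  edges of M at x and at y, where 0, 1, 2 stand for the edges to x0, x1, y
  (respectively y0, y1, x).\<close>

definition end_index :: "'a set set \<Rightarrow> 'a \<Rightarrow> 'a \<Rightarrow> 'a \<Rightarrow> nat" where
  "end_index M v a b = (if {v, a} \<in> M then 0 else if {v, b} \<in> M then 1 else 2)"

lemma end_index_iff:
  assumes "cubic V E" "perfect_matching V E M"
    and "{v, a} \<in> E" "{v, b} \<in> E" "{v, c} \<in> E" "a \<noteq> b" "a \<noteq> c" "b \<noteq> c"
  shows "(end_index M v a b = 0 \<longleftrightarrow> {v, a} \<in> M) \<and> (end_index M v a b = 1 \<longleftrightarrow> {v, b} \<in> M)
    \<and> (end_index M v a b = 2 \<longleftrightarrow> {v, c} \<in> M)"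
proof -
  have "graph V E" using assms(1) unfolding cubic_def by simp
  then have "v \<in> V" using graph_edge_ends[of V E v a] assms(3) by simp
  obtain e where e: "e \<in> M" "v \<in> e"
    by (rule perfect_matching_edge_exists[OF assms(2) \<open>v \<in> V\<close>])
  have "e \<in> {e \<in> E. v \<in> e}" using e assms(2) unfolding perfect_matching_def by blast
  then have cases: "e = {v, a} \<or> e = {v, b} \<or> e = {v, c}" using cubic_edges_at[OF assms(1,3-8)] by simp
  have unique: "f \<in> M \<longleftrightarrow> f = e" if "v \<in> f" for f
    using perfect_matching_edge_unique[OF assms(2) \<open>v \<in> V\<close> _ e(1) that e(2)] e(1) by blast
  have mem: "{v, a} \<in> M \<longleftrightarrow> e = {v, a}" "{v, b} \<in> M \<longleftrightarrow> e = {v, b}" "{v, c} \<in> M \<longleftrightarrow> e = {v, c}"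
    using unique[of "{v, a}"] unique[of "{v, b}"] unique[of "{v, c}"] by auto
  have ne: "{v, a} \<noteq> {v, b}" "{v, a} \<noteq> {v, c}" "{v, b} \<noteq> {v, c}"
    using assms(6-8) by (simp_all add: doubleton_eq_iff)
  from cases show ?thesis
    unfolding end_index_def mem using ne ne[symmetric] by (elim disjE) simp_all
qed

locale cubic_edge =
  fixes V :: "'a set" and E :: "'a set set" and x y x0 x1 y0 y1 :: 'a
  assumes cubic: "cubic V E"
    and edges: "{x, y} \<in> E" "{x, x0} \<in> E" "{x, x1} \<in> E" "{y, y0} \<in> E" "{y, y1} \<in> E"
    and distinct: "x0 \<noteq> x1" "x0 \<noteq> y" "x1 \<noteq> y" "y0 \<noteq> y1" "y0 \<noteq> x" "y1 \<noteq> x"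
begin

definition end_type :: "'a set set \<Rightarrow> nat \<times> nat" where
  "end_type M = (end_index M x x0 x1, end_index M y y0 y1)"

lemma end_type_iff:
  assumes "perfect_matching V E M"
  shows "(fst (end_type M) = 0 \<longleftrightarrow> {x, x0} \<in> M) \<and> (fst (end_type M) = 1 \<longleftrightarrow> {x, x1} \<in> M)
    \<and> (fst (end_type M) = 2 \<longleftrightarrow> {x, y} \<in> M)"
    "(snd (end_type M) = 0 \<longleftrightarrow> {y, y0} \<in> M) \<and> (snd (end_type M) = 1 \<longleftrightarrow> {y, y1} \<in> M)
    \<and> (snd (end_type M) = 2 \<longleftrightarrow> {x, y} \<in> M)"
proof -
  have yx: "{y, x} = {x, y}" by (rule insert_commute)
  show "(fst (end_type M) = 0 \<longleftrightarrow> {x, x0} \<in> M) \<and> (fst (end_type M) = 1 \<longleftrightarrow> {x, x1} \<in> M)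
    \<and> (fst (end_type M) = 2 \<longleftrightarrow> {x, y} \<in> M)"
    using end_index_iff[OF cubic assms edges(2,3,1) distinct(1-3)] unfolding end_type_def by simp
  show "(snd (end_type M) = 0 \<longleftrightarrow> {y, y0} \<in> M) \<and> (snd (end_type M) = 1 \<longleftrightarrow> {y, y1} \<in> M)
    \<and> (snd (end_type M) = 2 \<longleftrightarrow> {x, y} \<in> M)"
    using end_index_iff[OF cubic assms edges(4,5), of x] edges(1) distinct(4-6)
    unfolding end_type_def yx by simp
qed

lemma end_type_cases:
  assumes "perfect_matching V E M"
  shows "end_type M \<in> {(0,0), (0,1), (1,0), (1,1), (2,2)}"
proof -
  have "fst (end_type M) \<le> 2" "snd (end_type M) \<le> 2"
    unfolding end_type_def end_index_def by auto
  then have "fst (end_type M) \<in> {0, 1, 2}" "snd (end_type M) \<in> {0, 1, 2}" by auto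
  moreover have "fst (end_type M) = 2 \<longleftrightarrow> snd (end_type M) = 2" using end_type_iff[OF assms] by simp
  ultimately show ?thesis by (cases "end_type M") auto
qed

lemma end_types_filter_size:
  assumes "fulkerson_cover V E Ms" "e \<in> E" "\<And>M. perfect_matching V E M \<Longrightarrow> P (end_type M) \<longleftrightarrow> e \<in> M"
  shows "size {#t \<in># mset (map end_type Ms). P t#} = 2"
proof -
  have "size {#t \<in># mset (map end_type Ms). P t#} = length (filter P (map end_type Ms))"
    by (metis mset_filter size_mset)
  also have "\<dots> = length (filter (\<lambda>M. e \<in> M) Ms)"
    using assms(1,3) unfolding fulkerson_cover_def by (simp add: filter_map comp_def cong: filter_cong)
  also have "\<dots> = 2" using assms(1,2) unfolding fulkerson_cover_def by simp
  finally show ?thesis .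
qed

lemma end_types_pattern:
  assumes "fulkerson_cover V E Ms"
  shows "count (mset (map end_type Ms)) (0,0) \<le> 2
    \<and> mset (map end_type Ms) = type_pattern (count (mset (map end_type Ms)) (0,0))"
proof (rule type_pattern_of_margins)
  note count = end_types_filter_size[OF assms]
  have "\<forall>M\<in>set Ms. end_type M \<in> {(0,0), (0,1), (1,0), (1,1), (2,2)}"
    using end_type_cases assms unfolding fulkerson_cover_def by blast
  then show "set_mset (mset (map end_type Ms)) \<subseteq> {(0,0), (0,1), (1,0), (1,1), (2,2)}"
    by (simp only: set_mset_mset set_map image_subset_iff)
  have "count (mset (map end_type Ms)) (2,2) = size {#t \<in># mset (map end_type Ms). t = (2,2)#}"
    by (simp add: filter_eq_replicate_mset)
  also have "\<dots> = 2"
    using end_type_iff by (intro count[OF edges(1)]) (auto simp: prod_eq_iff)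
  finally show "count (mset (map end_type Ms)) (2,2) = 2" .
  show "size {#t \<in># mset (map end_type Ms). fst t = v#} = 2" if "v < 2" for v
  proof -
    have "v = 0 \<or> v = 1" using that by auto
    then show ?thesis
    proof
      assume "v = 0"
      then show ?thesis using end_type_iff(1) by (intro count[OF edges(2)]) simp
    next
      assume "v = 1"
      then show ?thesis using end_type_iff(1) by (intro count[OF edges(3)]) simp
    qed
  qed
  show "size {#t \<in># mset (map end_type Ms). snd t = v#} = 2" if "v < 2" for v
  proof -
    have "v = 0 \<or> v = 1" using that by auto
    then show ?thesis
    proof
      assume "v = 0"
      then show ?thesis using end_type_iff(2) by (intro count[OF edges(4)]) simp
    next
      assume "v = 1"
      then show ?thesis using end_type_iff(2) by (intro count[OF edges(5)]) simp
    qed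
  qed
qed

end

lemma M_ingredient_cubic_edge:
  "M_ingredient V E x y x0 x1 y0 y1 \<Longrightarrow> cubic_edge V E x y x0 x1 y0 y1"
  unfolding M_ingredient_def cubic_edge_def by blast

section \<open>Arranging the six matchings of each ingredient\<close>

text \<open>A block is a pair of matchings with prescribed end types: both through the edge x y,
  or with x-ends a, 1 - a (X_block a), or with y-ends b, 1 - b (Y_block b); in the last two
  cases the other ends are forced by the type pattern.\<close>

datatype block = XY_block | X_block nat | Y_block nat

fun block_type :: "nat \<Rightarrow> block \<Rightarrow> nat \<Rightarrow> nat \<times> nat" where
  "block_type n XY_block p = (2, 2)"
| "block_type n (X_block a) p = (let v = if p = 0 then a else 1 - a in (v, if 1 \<le> n then v else 1 - v))"
| "block_type n (Y_block b) p = (let v = if p = 0 then b else 1 - b in (if n = 2 then v else 1 - v, v))"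

definition block_types :: "nat \<Rightarrow> block \<Rightarrow> (nat \<times> nat) multiset" where
  "block_types n K = {#block_type n K 0, block_type n K 1#}"

lemma block_types_type_pattern:
  assumes "n \<le> 2" "a \<le> 1" "b \<le> 1"
  shows "block_types n XY_block + block_types n (X_block a) + block_types n (Y_block b) = type_pattern n"
proof -
  have "n = 0 \<or> n = 1 \<or> n = 2" "a = 0 \<or> a = 1" "b = 0 \<or> b = 1" using assms by auto
  then show ?thesis unfolding type_pattern_def block_types_def
    by (elim disjE) (simp_all add: add_mset_commute)
qed

lemma block_type_le_two:
  assumes "\<And>a. K = X_block a \<Longrightarrow> a \<le> 1" "\<And>a. K = Y_block a \<Longrightarrow> a \<le> 1"
  shows "(fst (block_type n K p) = 2 \<longleftrightarrow> K = XY_block) \<and> (snd (block_type n K p) = 2 \<longleftrightarrow> K = XY_block)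
    \<and> fst (block_type n K p) \<le> 2 \<and> snd (block_type n K p) \<le> 2"
  using assms by (cases K) (auto simp: Let_def)

text \<open>The ingredients are arranged around the cycle so that the y-end of the r-th matching of
  G_j always differs from the x-end of the r-th matching of G_(j+1). Slot b (matchings 2b and
  2b + 1) of G_i holds its two xy-matchings iff b = xy_slot i. The value flip_chain j is the
  y-end of the first matching of G_j in the slot where G_(j+1) has its X_block; that X_block
  starts with the other value.\<close>

locale arrangement =
  fixes k :: nat and n :: "nat \<Rightarrow> nat"
  assumes three_le_k: "3 \<le> k"
begin

fun flip_chain :: "nat \<Rightarrow> nat" where
  "flip_chain 0 = 0"
| "flip_chain (Suc 0) = (if even k \<and> 1 \<le> n 1 then 1 else 0)"
| "flip_chain (Suc (Suc 0)) = 0"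
| "flip_chain (Suc (Suc (Suc j))) =
    (if 1 \<le> n (Suc (Suc (Suc j))) then 1 - flip_chain (Suc (Suc j)) else flip_chain (Suc (Suc j)))"

lemma flip_chain_le_one: "flip_chain j \<le> 1"
  by (induction j rule: flip_chain.induct) auto

lemma flip_chain_step: "3 \<le> j \<Longrightarrow> flip_chain j = (if 1 \<le> n j then 1 - flip_chain (j - 1) else flip_chain (j - 1))"
  by (cases j rule: flip_chain.cases) auto

definition block_kind :: "nat \<Rightarrow> nat \<Rightarrow> block" where
  "block_kind i b =
    (if i = 0 then [XY_block, X_block (1 - flip_chain (k - 1)), Y_block 0] ! b
     else if i = 1 then [Y_block 0, XY_block, X_block 1] ! b
     else if i = 2 then
       (if even k then [XY_block, Y_block 0, X_block (1 - flip_chain 1)]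
        else [X_block (1 - flip_chain 1), Y_block 0, XY_block]) ! b
     else
       (if even (i + k) then [XY_block, X_block (1 - flip_chain (i - 1)), Y_block 0]
        else [Y_block 0, X_block (1 - flip_chain (i - 1)), XY_block]) ! b)"

definition xy_slot :: "nat \<Rightarrow> nat" where
  "xy_slot i = (if i = 0 then 0 else if i = 1 then 1 else if even (i + k) then 0 else 2)"

definition planned_type :: "nat \<Rightarrow> nat \<Rightarrow> nat \<times> nat" where
  "planned_type i r = block_type (n i) (block_kind i (r div 2)) (r mod 2)"

lemma planned_types:
  assumes "n i \<le> 2"
  shows "mset (map (planned_type i) [0..<6]) = type_pattern (n i)"
proof -
  define a where "a = (if i = 0 then 1 - flip_chain (k - 1) else if i = 1 then 1
    else if i = 2 then 1 - flip_chain 1 else 1 - flip_chain (i - 1))"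
  have "[0..<6] = [0, 1, 2, 3, 4, 5::nat]" by (simp add: upt_rec)
  then have "mset (map (planned_type i) [0..<6])
      = block_types (n i) (block_kind i 0) + block_types (n i) (block_kind i 1) + block_types (n i) (block_kind i 2)"
    unfolding planned_type_def block_types_def by simp
  also have "\<dots> = block_types (n i) XY_block + block_types (n i) (X_block a) + block_types (n i) (Y_block 0)"
    unfolding block_kind_def a_def
    by (cases "i = 0"; cases "i = 1"; cases "i = 2"; cases "even k"; cases "even (i + k)") (simp_all add: ac_simps)
  also have "\<dots> = type_pattern (n i)"
    using assms by (rule block_types_type_pattern) (simp_all add: a_def)
  finally show ?thesis .
qed

lemma planned_type_two_iff:
  assumes "r < 6"
  shows "(fst (planned_type i r) = 2 \<longleftrightarrow> r div 2 = xy_slot i) \<and> (snd (planned_type i r) = 2 \<longleftrightarrow> r div 2 = xy_slot i)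
    \<and> fst (planned_type i r) \<le> 2 \<and> snd (planned_type i r) \<le> 2"
proof -
  have "r div 2 = 0 \<or> r div 2 = 1 \<or> r div 2 = 2" using assms by auto
  then have "(block_kind i (r div 2) = XY_block \<longleftrightarrow> r div 2 = xy_slot i)
      \<and> (\<forall>a. block_kind i (r div 2) = X_block a \<longrightarrow> a \<le> 1) \<and> (\<forall>a. block_kind i (r div 2) = Y_block a \<longrightarrow> a \<le> 1)"
    unfolding block_kind_def xy_slot_def by (elim disjE) auto
  then show ?thesis unfolding planned_type_def using block_type_le_two by metis
qed

text \<open>The vertex c_j is covered by the tree matching of class c (see tree_edges_Cv).\<close>

definition tree_covers :: "nat \<Rightarrow> nat \<Rightarrow> bool" where
  "tree_covers c j \<longleftrightarrow> (if c = 1 then 2 \<le> j else if j = 0 then c = 2 else j = 1 \<and> (c = 2 \<longleftrightarrow> even k))"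

lemma planned_ends_avoid_xy_iff:
  assumes j: "j < k" and r: "r < 6"
  shows "snd (planned_type j r) \<noteq> 2 \<and> fst (planned_type ((j + 1) mod k) r) \<noteq> 2 \<longleftrightarrow> tree_covers (r div 2) j"
proof -
  have avoid: "snd (planned_type j r) \<noteq> 2 \<and> fst (planned_type ((j + 1) mod k) r) \<noteq> 2
      \<longleftrightarrow> r div 2 \<noteq> xy_slot j \<and> r div 2 \<noteq> xy_slot ((j + 1) mod k)"
    using planned_type_two_iff[OF r] by blast
  have b: "r div 2 = 0 \<or> r div 2 = 1 \<or> r div 2 = 2" using r by auto
  consider "j + 1 < k" | "j + 1 = k" using j by linarith
  then show ?thesis
  proof cases
    case 1
    then have "(j + 1) mod k = j + 1" by simp
    then show ?thesis unfolding avoid tree_covers_def xy_slot_def using b by auto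
  next
    case 2
    then have "(j + 1) mod k = 0" "odd (j + k)" "j \<noteq> 0" "j \<noteq> 1" using three_le_k by auto
    then show ?thesis unfolding avoid tree_covers_def xy_slot_def using b by auto
  qed
qed

lemma block_kind_eqs:
  "block_kind 0 = (\<lambda>b. [XY_block, X_block (1 - flip_chain (k - 1)), Y_block 0] ! b)"
  "block_kind 1 = (\<lambda>b. [Y_block 0, XY_block, X_block 1] ! b)"
  "block_kind 2 = (\<lambda>b. (if even k then [XY_block, Y_block 0, X_block (1 - flip_chain 1)]
     else [X_block (1 - flip_chain 1), Y_block 0, XY_block]) ! b)"
  "3 \<le> i \<Longrightarrow> block_kind i = (\<lambda>b. (if even (i + k) then [XY_block, X_block (1 - flip_chain (i - 1)), Y_block 0]
     else [Y_block 0, X_block (1 - flip_chain (i - 1)), XY_block]) ! b)"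
  unfolding block_kind_def by auto

lemma block_y_end_ne_next_x_end_from_three:
  assumes j: "3 \<le> j" "j < k" and b: "b < 3" and p: "p < 2"
  shows "snd (block_type (n j) (block_kind j b) p) \<noteq> fst (block_type (n ((j + 1) mod k)) (block_kind ((j + 1) mod k) b) p)"
proof -
  have b: "b = 0 \<or> b = 1 \<or> b = 2" and p: "p = 0 \<or> p = 1" using b p by auto
  have chain: "flip_chain (j - 1) = 0 \<or> flip_chain (j - 1) = 1" using flip_chain_le_one[of "j - 1"] by linarith
  have step: "flip_chain j = (if 1 \<le> n j then 1 - flip_chain (j - 1) else flip_chain (j - 1))"
    using flip_chain_step j(1) by blast
  note kinds = block_kind_eqs
  consider "j + 1 < k" | "j + 1 = k" using j(2) by linarith
  then show ?thesis
  proof cases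
    case 1
    have kind_next: "block_kind (Suc j) = (\<lambda>b. (if even (j + k) then [Y_block 0, X_block (1 - flip_chain j), XY_block]
        else [XY_block, X_block (1 - flip_chain j), Y_block 0]) ! b)"
      using kinds(4)[of "Suc j"] j(1) by auto
    have nxt: "(j + 1) mod k = Suc j" using 1 by simp
    show ?thesis using b p chain step unfolding nxt kinds(4)[OF j(1)] kind_next
      by (cases "even (j + k)"; elim disjE) (simp_all add: Let_def)
  next
    case 2
    have nxt: "(j + 1) mod k = 0" and "k - 1 = j" "odd (j + k)" using 2 by auto
    then show ?thesis using b p chain step unfolding nxt kinds(1) kinds(4)[OF j(1)]
      by (elim disjE) (simp_all add: Let_def)
  qed
qed

lemma block_y_end_ne_next_x_end:
  assumes j: "j < k" and b: "b < 3" and p: "p < 2"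
  shows "snd (block_type (n j) (block_kind j b) p) \<noteq> fst (block_type (n ((j + 1) mod k)) (block_kind ((j + 1) mod k) b) p)"
proof -
  have b: "b = 0 \<or> b = 1 \<or> b = 2" and p: "p = 0 \<or> p = 1" using b p by auto
  have chain: "flip_chain 1 = 0 \<or> flip_chain 1 = 1" "flip_chain (k - 1) = 0 \<or> flip_chain (k - 1) = 1"
    using flip_chain_le_one[of 1] flip_chain_le_one[of "k - 1"] by linarith+
  have chain2: "flip_chain 2 = 0" by (simp add: numeral_2_eq_2)
  note kinds = block_kind_eqs
  consider "j = 0" | "j = 1" | "j = 2" "k = 3" | "j = 2" "3 < k" | "3 \<le> j"
    using j three_le_k by linarith
  then show ?thesis
  proof cases
    case 1
    have nxt: "(j + 1) mod k = 1" using 1 three_le_k by simp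
    show ?thesis using b p chain(2) unfolding nxt unfolding 1 kinds
      by (elim disjE) (simp_all add: Let_def)
  next
    case 2
    have nxt: "(j + 1) mod k = 2" using 2 three_le_k by simp
    show ?thesis using b p unfolding nxt unfolding 2 kinds
      by (cases "even k"; cases "1 \<le> n 1"; elim disjE) (simp_all add: Let_def)
  next
    case 3
    have nxt: "(j + 1) mod k = 0" and "k - 1 = 2" "odd k" using 3 by auto
    then show ?thesis using b p chain2 unfolding nxt unfolding 3(1) kinds by (elim disjE) (simp_all add: Let_def)
  next
    case 4
    have kind3: "block_kind 3 = (\<lambda>b. (if odd k then [XY_block, X_block 1, Y_block 0]
        else [Y_block 0, X_block 1, XY_block]) ! b)"
      using kinds(4)[of 3] by (simp add: chain2)
    have nxt: "(j + 1) mod k = 3" using 4 by simp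
    show ?thesis using b p unfolding nxt unfolding 4(1) kinds(3) kind3
      by (cases "even k"; elim disjE) (simp_all add: Let_def)
  next
    case 5
    then show ?thesis using block_y_end_ne_next_x_end_from_three j assms(2,3) by blast
  qed
qed

lemma planned_y_end_ne_next_x_end:
  "j < k \<Longrightarrow> r < 6 \<Longrightarrow> snd (planned_type j r) \<noteq> fst (planned_type ((j + 1) mod k) r)"
  unfolding planned_type_def by (rule block_y_end_ne_next_x_end) auto

end

section \<open>The path and its pendant edges\<close>

lemma length_M_path: "2 \<le> k \<Longrightarrow> length (M_path k) = k"
  unfolding M_path_def by simp

lemma nth_M_path:
  "2 \<le> k \<Longrightarrow> q < k \<Longrightarrow> M_path k ! q = (if q = 0 then Cv 1 else if q = k - 1 then Cv 0 else Pv (q - 1))"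
  unfolding M_path_def by (auto simp: nth_append nth_Cons')

lemma distinct_M_path: "distinct (M_path k)"
  unfolding M_path_def by (auto simp: distinct_map inj_on_def)

lemma M_path_vertices: "v \<in> set (M_path k) \<Longrightarrow> v = Cv 0 \<or> v = Cv 1 \<or> (\<exists>m. v = Pv m)"
  unfolding M_path_def by auto

context arrangement
begin

text \<open>Class 1 consists of the pendant edges, classes 0 and 2 of
  alternate path edges; each class is used by two of the six matchings.\<close>

definition path_edge :: "nat \<Rightarrow> 'b mvert set" where
  "path_edge i = {M_path k ! i, M_path k ! (i + 1)}"

definition pendant_edge :: "nat \<Rightarrow> 'b mvert set" where
  "pendant_edge j = {Cv j, Pv (j - 2)}"

definition tree_edges :: "nat \<Rightarrow> 'b mvert set set" where
  "tree_edges c = (if c = 1 then pendant_edge ` {2..<k}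
     else path_edge ` {i. i + 1 < k \<and> (even (i + k) \<longleftrightarrow> c = 2)})"

lemma two_le_k: "2 \<le> k"
  using three_le_k by simp

lemma path_vertex_in_path_edge_iff:
  assumes "q < k" "i + 1 < k"
  shows "M_path k ! q \<in> path_edge i \<longleftrightarrow> q = i \<or> q = i + 1"
  using assms two_le_k unfolding path_edge_def by (simp add: nth_eq_iff_index_eq distinct_M_path length_M_path)

lemma Pv_as_path_vertex: "m < k - 2 \<Longrightarrow> Pv m = M_path k ! (m + 1)"
  using two_le_k by (simp add: nth_M_path)

lemma Pv_in_path_edge_iff:
  assumes "m < k - 2" "i + 1 < k"
  shows "Pv m \<in> path_edge i \<longleftrightarrow> i = m \<or> i = m + 1"
  using assms by (auto simp: Pv_as_path_vertex path_vertex_in_path_edge_iff)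

lemma path_edge_subset: "i + 1 < k \<Longrightarrow> path_edge i \<subseteq> set (M_path k)"
  using two_le_k unfolding path_edge_def by (simp add: length_M_path)

lemma Cv_in_path_edge_iff:
  assumes "i + 1 < k"
  shows "Cv j \<in> path_edge i \<longleftrightarrow> (j = 1 \<and> i = 0) \<or> (j = 0 \<and> i + 2 = k)"
proof -
  have one: "Cv 1 \<in> path_edge i \<longleftrightarrow> i = 0"
    using path_vertex_in_path_edge_iff[OF _ assms, of 0] three_le_k by (simp add: nth_M_path)
  have zero: "Cv 0 \<in> path_edge i \<longleftrightarrow> i + 2 = k"
    using path_vertex_in_path_edge_iff[OF _ assms, of "k - 1"] three_le_k assms by (auto simp: nth_M_path)
  have "Cv j \<notin> path_edge i" if "j \<noteq> 0" "j \<noteq> 1"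
    using that M_path_vertices path_edge_subset[OF assms] by blast
  then show ?thesis using one zero by (cases "j = 0 \<or> j = 1") auto
qed

lemma tree_edges_Pv:
  assumes "c < 3" "m < k - 2"
  shows "\<exists>!e. e \<in> tree_edges c \<and> Pv m \<in> e"
proof (cases "c = 1")
  case True
  have "pendant_edge (m + 2) \<in> tree_edges c \<and> Pv m \<in> pendant_edge (m + 2)"
    using True assms unfolding tree_edges_def pendant_edge_def by auto
  moreover have "e = pendant_edge (m + 2)" if "e \<in> tree_edges c" "Pv m \<in> e" for e
    using that True unfolding tree_edges_def pendant_edge_def by auto
  ultimately show ?thesis by blast
next
  case False
  define i where "i = (if even (m + k) \<longleftrightarrow> c = 2 then m else m + 1)"
  have i: "i + 1 < k" "i = m \<or> i = m + 1" "even (i + k) \<longleftrightarrow> c = 2"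
    unfolding i_def using assms(2) by auto
  have "path_edge i \<in> tree_edges c" using False i unfolding tree_edges_def by auto
  moreover have "Pv m \<in> path_edge i" using i assms(2) by (simp add: Pv_in_path_edge_iff)
  moreover have "e = path_edge i" if e: "e \<in> tree_edges c" "Pv m \<in> e" for e
  proof -
    obtain i' where i': "e = path_edge i'" "i' + 1 < k" "even (i' + k) \<longleftrightarrow> c = 2"
      using e(1) False unfolding tree_edges_def by auto
    then have "i' = m \<or> i' = m + 1" using e(2) assms(2) by (simp add: Pv_in_path_edge_iff)
    with i i' show ?thesis by auto
  qed
  ultimately show ?thesis by blast
qed

lemma tree_edges_Cv:
  assumes "c < 3" "j < k"
  shows "(\<exists>e\<in>tree_edges c. Cv j \<in> e) \<longleftrightarrow> tree_covers c j"
    and "\<lbrakk>e \<in> tree_edges c; e' \<in> tree_edges c; Cv j \<in> e; Cv j \<in> e'\<rbrakk> \<Longrightarrow> e = e'"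
proof -
  show "(\<exists>e\<in>tree_edges c. Cv j \<in> e) \<longleftrightarrow> tree_covers c j"
  proof (cases "c = 1")
    case True
    then show ?thesis using assms unfolding tree_edges_def tree_covers_def pendant_edge_def by auto
  next
    case False
    have "(\<exists>e\<in>tree_edges c. Cv j \<in> e)
        \<longleftrightarrow> (\<exists>i. i + 1 < k \<and> (even (i + k) \<longleftrightarrow> c = 2) \<and> ((j = 1 \<and> i = 0) \<or> (j = 0 \<and> i + 2 = k)))"
      using False unfolding tree_edges_def by (auto simp: Cv_in_path_edge_iff)
    also have "\<dots> \<longleftrightarrow> (j = 1 \<and> (even k \<longleftrightarrow> c = 2)) \<or> (j = 0 \<and> c = 2)"
    proof
      assume "\<exists>i. i + 1 < k \<and> (even (i + k) \<longleftrightarrow> c = 2) \<and> ((j = 1 \<and> i = 0) \<or> (j = 0 \<and> i + 2 = k))"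
      then obtain i where "even (i + k) \<longleftrightarrow> c = 2" "(j = 1 \<and> i = 0) \<or> (j = 0 \<and> i + 2 = k)" by blast
      then show "(j = 1 \<and> (even k \<longleftrightarrow> c = 2)) \<or> (j = 0 \<and> c = 2)" by auto
    next
      assume "(j = 1 \<and> (even k \<longleftrightarrow> c = 2)) \<or> (j = 0 \<and> c = 2)"
      moreover have "k - 2 + 1 < k" "even (k - 2 + k)" "k - 2 + 2 = k" "0 + 1 < k" using three_le_k by auto
      ultimately show "\<exists>i. i + 1 < k \<and> (even (i + k) \<longleftrightarrow> c = 2) \<and> ((j = 1 \<and> i = 0) \<or> (j = 0 \<and> i + 2 = k))"
        by (metis add_0)
    qed
    finally show ?thesis using False unfolding tree_covers_def by auto
  qed
  show "e = e'" if "e \<in> tree_edges c" "e' \<in> tree_edges c" "Cv j \<in> e" "Cv j \<in> e'"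
    using that unfolding tree_edges_def pendant_edge_def by (cases "c = 1") (auto simp: Cv_in_path_edge_iff)
qed

lemma path_edge_inj:
  assumes "i + 1 < k" "i' + 1 < k" "path_edge i = (path_edge i' :: 'a mvert set)"
  shows "i = i'"
proof -
  have "(M_path k ! i :: 'a mvert) \<in> path_edge i'" "(M_path k ! (i + 1) :: 'a mvert) \<in> path_edge i'"
    using assms(3) unfolding path_edge_def by auto
  then show ?thesis using assms(1,2) by (auto simp: path_vertex_in_path_edge_iff)
qed

lemma tree_edge_class:
  assumes "e \<in> path_edge ` {i. i + 1 < k} \<union> pendant_edge ` {2..<k}"
  obtains c0 where "c0 < 3" "\<And>c. c < 3 \<Longrightarrow> e \<in> tree_edges c \<longleftrightarrow> c = c0"
proof (cases "e \<in> pendant_edge ` {2..<k}")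
  case True
  then obtain j where j: "e = pendant_edge j" "2 \<le> j" "j < k" by auto
  have "Cv j \<in> e" using j(1) unfolding pendant_edge_def by simp
  then have "e \<notin> path_edge ` {i. i + 1 < k}" using j(2) by (auto simp: Cv_in_path_edge_iff)
  then have "e \<in> tree_edges c \<longleftrightarrow> c = 1" for c
    using True unfolding tree_edges_def by auto
  then show ?thesis using that[of 1] by simp
next
  case False
  then obtain i where i: "e = path_edge i" "i + 1 < k" using assms by auto
  have "e \<in> tree_edges c \<longleftrightarrow> c = (if even (i + k) then 2 else 0)" if "c < 3" for c
  proof
    assume "e \<in> tree_edges c"
    with False obtain i' where "c \<noteq> 1" "e = path_edge i'" "i' + 1 < k" "even (i' + k) \<longleftrightarrow> c = 2"
      unfolding tree_edges_def by (auto split: if_splits)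
    moreover from this have "i' = i" using path_edge_inj i by metis
    ultimately show "c = (if even (i + k) then 2 else 0)" using that by auto
  next
    assume "c = (if even (i + k) then 2 else 0)"
    then show "e \<in> tree_edges c" using i unfolding tree_edges_def by auto
  qed
  then show ?thesis using that[of "if even (i + k) then 2 else 0"] by simp
qed

lemma tree_edge_count:
  assumes "e \<in> path_edge ` {i. i + 1 < k} \<union> pendant_edge ` {2..<k}"
  shows "card {r. r < 6 \<and> e \<in> tree_edges (r div 2)} = 2"
proof -
  obtain c0 where c0: "c0 < 3" "\<And>c. c < 3 \<Longrightarrow> e \<in> tree_edges c \<longleftrightarrow> c = c0"
    using tree_edge_class[OF assms] by blast
  then have "{r. r < 6 \<and> e \<in> tree_edges (r div 2)} = {r. r < 6 \<and> r div 2 = c0}" by auto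
  then show ?thesis using card_div_two_eq[OF c0(1)] by simp
qed

lemma tree_edge_vertices:
  assumes "e \<in> tree_edges c" "v \<in> e"
  shows "\<exists>j. v = Cv j \<or> v = Pv j"
proof (cases "c = 1")
  case True
  then show ?thesis using assms unfolding tree_edges_def pendant_edge_def by auto
next
  case False
  then obtain i where "e = path_edge i" "i + 1 < k" using assms(1) unfolding tree_edges_def by auto
  then have "v \<in> set (M_path k)" using assms(2) path_edge_subset by blast
  then show ?thesis by (auto dest: M_path_vertices)
qed

end

section \<open>The six matchings of the glued graph\<close>

locale ingredients =
  fixes k :: nat and V :: "nat \<Rightarrow> 'a set" and E :: "nat \<Rightarrow> 'a set set"
    and x y x0 x1 y0 y1 :: "nat \<Rightarrow> 'a"
  assumes three_le_k: "3 \<le> k"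
    and ingredient: "\<And>i. i < k \<Longrightarrow> M_ingredient (V i) (E i) (x i) (y i) (x0 i) (x1 i) (y0 i) (y1 i)"
begin

lemma cubic_edge: "i < k \<Longrightarrow> cubic_edge (V i) (E i) (x i) (y i) (x0 i) (x1 i) (y0 i) (y1 i)"
  by (rule M_ingredient_cubic_edge[OF ingredient])

lemma ingredient_facts:
  assumes "i < k"
  shows "{x i, y i} \<in> E i" "{x i, x0 i} \<in> E i" "{x i, x1 i} \<in> E i" "{y i, y0 i} \<in> E i" "{y i, y1 i} \<in> E i"
    "x0 i \<noteq> x1 i" "x0 i \<noteq> y i" "x1 i \<noteq> y i" "y0 i \<noteq> y1 i" "y0 i \<noteq> x i" "y1 i \<noteq> x i"
    "graph (V i) (E i)"
  using cubic_edge[OF assms] unfolding cubic_edge_def cubic_def by auto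

lemma ingredient_ends:
  assumes "i < k"
  shows "x i \<noteq> y i" "x0 i \<noteq> x i" "x1 i \<noteq> x i" "y0 i \<noteq> y i" "y1 i \<noteq> y i"
proof -
  note ends = graph_edge_ends[OF ingredient_facts(12)[OF assms]]
  show "x i \<noteq> y i" "x0 i \<noteq> x i" "x1 i \<noteq> x i" "y0 i \<noteq> y i" "y1 i \<noteq> y i"
    using ends[OF ingredient_facts(1)[OF assms]] ends[OF ingredient_facts(2)[OF assms]]
      ends[OF ingredient_facts(3)[OF assms]] ends[OF ingredient_facts(4)[OF assms]]
      ends[OF ingredient_facts(5)[OF assms]] by auto
qed

abbreviation end_type_at :: "nat \<Rightarrow> 'a set set \<Rightarrow> nat \<times> nat" where
  "end_type_at i \<equiv> cubic_edge.end_type (x i) (y i) (x0 i) (x1 i) (y0 i) (y1 i)"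

definition cover :: "nat \<Rightarrow> 'a set set list" where
  "cover i = (SOME Ms. fulkerson_cover (V i) (E i) Ms)"

lemma fulkerson_cover_cover:
  assumes "i < k"
  shows "fulkerson_cover (V i) (E i) (cover i)"
proof -
  have "\<exists>Ms. fulkerson_cover (V i) (E i) Ms"
    using ingredient[OF assms] unfolding M_ingredient_def has_fulkerson_cover_def by blast
  then show ?thesis unfolding cover_def by (rule someI_ex)
qed

definition zero_count :: "nat \<Rightarrow> nat" where
  "zero_count i = count (mset (map (end_type_at i) (cover i))) (0,0)"

sublocale arrangement k zero_count
  using three_le_k by unfold_locales

lemma exists_arranged_cover:
  assumes "i < k"
  shows "\<exists>L. mset L = mset (cover i) \<and> map (end_type_at i) L = map (planned_type i) [0..<6]"
proof -
  have pattern: "zero_count i \<le> 2 \<and> mset (map (end_type_at i) (cover i)) = type_pattern (zero_count i)"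
    unfolding zero_count_def by (rule cubic_edge.end_types_pattern[OF cubic_edge[OF assms] fulkerson_cover_cover[OF assms]])
  then have "mset (map (planned_type i) [0..<6]) = mset (map (end_type_at i) (cover i))"
    using planned_types by simp
  moreover have "list_all2 (\<lambda>t M. t = end_type_at i M) (map (end_type_at i) (cover i)) (cover i)"
    by (simp add: list_all2_conv_all_nth)
  ultimately obtain L where "list_all2 (\<lambda>t M. t = end_type_at i M) (map (planned_type i) [0..<6]) L"
    "mset L = mset (cover i)"
    using list_all2_reorder_left_invariance by blast
  then have "list_all2 (=) (map (planned_type i) [0..<6]) (map (end_type_at i) L)"
    by (simp add: list_all2_map2)
  then have "map (planned_type i) [0..<6] = map (end_type_at i) L" by (rule list_all2_eq[THEN iffD2])
  with \<open>mset L = mset (cover i)\<close> show ?thesis by (intro exI[of _ L]) simp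
qed

definition arranged_cover :: "nat \<Rightarrow> 'a set set list" where
  "arranged_cover i = (SOME L. mset L = mset (cover i) \<and> map (end_type_at i) L = map (planned_type i) [0..<6])"

definition cover_matching :: "nat \<Rightarrow> nat \<Rightarrow> 'a set set" where
  "cover_matching i r = arranged_cover i ! r"

lemma arranged_cover_spec:
  assumes "i < k"
  shows "fulkerson_cover (V i) (E i) (arranged_cover i)"
    and "map (end_type_at i) (arranged_cover i) = map (planned_type i) [0..<6]"
  using someI_ex[OF exists_arranged_cover[OF assms]] fulkerson_cover_reorder fulkerson_cover_cover[OF assms]
  unfolding arranged_cover_def by blast+

lemma cover_matching_perfect:
  "i < k \<Longrightarrow> r < 6 \<Longrightarrow> perfect_matching (V i) (E i) (cover_matching i r)"
  unfolding cover_matching_def using arranged_cover_spec(1) fulkerson_cover_nth(1) by blast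

lemma cover_matching_count:
  "i < k \<Longrightarrow> e \<in> E i \<Longrightarrow> card {r. r < 6 \<and> e \<in> cover_matching i r} = 2"
  unfolding cover_matching_def using arranged_cover_spec(1) fulkerson_cover_nth(2) by blast

lemma end_type_cover_matching:
  assumes "i < k" "r < 6"
  shows "end_type_at i (cover_matching i r) = planned_type i r"
proof -
  have "length (arranged_cover i) = 6" using arg_cong[OF arranged_cover_spec(2)[OF assms(1)], of length] by simp
  then show ?thesis using nth_map[of r "arranged_cover i" "end_type_at i"] arranged_cover_spec(2)[OF assms(1)] assms(2)
    unfolding cover_matching_def by simp
qed

lemma next_index_lt: "j < k \<Longrightarrow> (j + 1) mod k < k"
  using three_le_k by simp

lemma next_index_ne: "j < k \<Longrightarrow> (j + 1) mod k \<noteq> j"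
  using three_le_k by (cases "j + 1 = k") auto

definition prev :: "nat \<Rightarrow> nat" where
  "prev i = (i + k - 1) mod k"

lemma prev_lt: "i < k \<Longrightarrow> prev i < k"
  unfolding prev_def using three_le_k by simp

lemma next_eq_iff_prev: "i < k \<Longrightarrow> j < k \<Longrightarrow> (j + 1) mod k = i \<longleftrightarrow> j = prev i"
  unfolding prev_def using three_le_k
  by (cases "i = 0"; cases "j + 1 = k") (auto simp: mod_if)

text \<open>These are the two ends competing for a_j (value 0) and b_j (value 1).\<close>

definition y_end :: "nat \<Rightarrow> nat \<Rightarrow> nat" where
  "y_end j r = snd (planned_type j r)"

definition x_end :: "nat \<Rightarrow> nat \<Rightarrow> nat" where
  "x_end j r = fst (planned_type ((j + 1) mod k) r)"

lemma y_end_iff: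
  assumes "j < k" "r < 6"
  shows "(y_end j r = 0 \<longleftrightarrow> {y j, y0 j} \<in> cover_matching j r) \<and> (y_end j r = 1 \<longleftrightarrow> {y j, y1 j} \<in> cover_matching j r)"
  using cubic_edge.end_type_iff(2)[OF cubic_edge[OF assms(1)] cover_matching_perfect[OF assms]]
  unfolding y_end_def end_type_cover_matching[OF assms] by simp

lemma x_end_iff:
  assumes "j < k" "r < 6" "i = (j + 1) mod k"
  shows "(x_end j r = 0 \<longleftrightarrow> {x i, x0 i} \<in> cover_matching i r) \<and> (x_end j r = 1 \<longleftrightarrow> {x i, x1 i} \<in> cover_matching i r)"
proof -
  have i: "i < k" using next_index_lt assms by simp
  show ?thesis
    using cubic_edge.end_type_iff(1)[OF cubic_edge[OF i] cover_matching_perfect[OF i assms(2)]]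
    unfolding x_end_def assms(3)[symmetric] end_type_cover_matching[OF i assms(2)] by simp
qed

lemma y_end_ne_x_end: "j < k \<Longrightarrow> r < 6 \<Longrightarrow> y_end j r \<noteq> x_end j r"
  unfolding y_end_def x_end_def by (rule planned_y_end_ne_next_x_end)

lemma ends_le_two: "r < 6 \<Longrightarrow> y_end j r \<le> 2 \<and> x_end j r \<le> 2"
  unfolding y_end_def x_end_def using planned_type_two_iff by blast

lemma card_y_end:
  assumes "j < k" "v < 2"
  shows "card {r. r < 6 \<and> y_end j r = v} = 2"
proof -
  have "v = 0 \<or> v = 1" using assms(2) by auto
  then show ?thesis
  proof
    assume "v = 0"
    then have "{r. r < 6 \<and> y_end j r = v} = {r. r < 6 \<and> {y j, y0 j} \<in> cover_matching j r}"
      using y_end_iff[OF assms(1)] by auto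
    then show ?thesis using cover_matching_count[OF assms(1)] ingredient_facts(4)[OF assms(1)] by simp
  next
    assume "v = 1"
    then have "{r. r < 6 \<and> y_end j r = v} = {r. r < 6 \<and> {y j, y1 j} \<in> cover_matching j r}"
      using y_end_iff[OF assms(1)] by auto
    then show ?thesis using cover_matching_count[OF assms(1)] ingredient_facts(5)[OF assms(1)] by simp
  qed
qed

lemma card_x_end:
  assumes "j < k" "v < 2"
  shows "card {r. r < 6 \<and> x_end j r = v} = 2"
proof -
  define i where "i = (j + 1) mod k"
  have i: "i < k" unfolding i_def using next_index_lt[OF assms(1)] .
  have "v = 0 \<or> v = 1" using assms(2) by auto
  then show ?thesis
  proof
    assume "v = 0"
    then have "{r. r < 6 \<and> x_end j r = v} = {r. r < 6 \<and> {x i, x0 i} \<in> cover_matching i r}"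
      using x_end_iff[OF assms(1) _ i_def] by auto
    then show ?thesis using cover_matching_count[OF i] ingredient_facts(2)[OF i] by simp
  next
    assume "v = 1"
    then have "{r. r < 6 \<and> x_end j r = v} = {r. r < 6 \<and> {x i, x1 i} \<in> cover_matching i r}"
      using x_end_iff[OF assms(1) _ i_def] by auto
    then show ?thesis using cover_matching_count[OF i] ingredient_facts(3)[OF i] by simp
  qed
qed

definition a_mate :: "nat \<Rightarrow> nat \<Rightarrow> 'a mvert" where
  "a_mate j r = (if y_end j r = 0 then Old j (y0 j)
     else if x_end j r = 0 then Old ((j + 1) mod k) (x0 ((j + 1) mod k)) else Cv j)"

definition b_mate :: "nat \<Rightarrow> nat \<Rightarrow> 'a mvert" where
  "b_mate j r = (if y_end j r = 1 then Old j (y1 j)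
     else if x_end j r = 1 then Old ((j + 1) mod k) (x1 ((j + 1) mod k)) else Cv j)"

definition old_edges :: "nat \<Rightarrow> 'a mvert set set" where
  "old_edges r = (\<Union>i<k. (\<lambda>f. Old i ` f) ` {f \<in> cover_matching i r. x i \<notin> f \<and> y i \<notin> f})"

definition gadget_edges :: "nat \<Rightarrow> 'a mvert set set" where
  "gadget_edges r = (\<Union>j<k. {{Av j, a_mate j r}, {Bv j, b_mate j r}})"

definition glued_matching :: "nat \<Rightarrow> 'a mvert set set" where
  "glued_matching r = old_edges r \<union> gadget_edges r \<union> tree_edges (r div 2)"

lemma mates_not_Av_Bv:
  "a_mate j r \<noteq> Av j'" "a_mate j r \<noteq> Bv j'" "b_mate j r \<noteq> Av j'" "b_mate j r \<noteq> Bv j'"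
  "a_mate j r \<noteq> Pv j'" "b_mate j r \<noteq> Pv j'"
  unfolding a_mate_def b_mate_def by auto

lemma Cv_eq_mate:
  "Cv j' = a_mate j r \<longleftrightarrow> j' = j \<and> y_end j r \<noteq> 0 \<and> x_end j r \<noteq> 0"
  "Cv j' = b_mate j r \<longleftrightarrow> j' = j \<and> y_end j r \<noteq> 1 \<and> x_end j r \<noteq> 1"
  unfolding a_mate_def b_mate_def by auto

lemma a_mate_eq_Old:
  "a_mate j r = Old i u \<longleftrightarrow> (y_end j r = 0 \<and> i = j \<and> u = y0 j)
    \<or> (y_end j r \<noteq> 0 \<and> x_end j r = 0 \<and> i = (j + 1) mod k \<and> u = x0 i)"
  unfolding a_mate_def by auto

lemma b_mate_eq_Old:
  "b_mate j r = Old i u \<longleftrightarrow> (y_end j r = 1 \<and> i = j \<and> u = y1 j)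
    \<or> (y_end j r \<noteq> 1 \<and> x_end j r = 1 \<and> i = (j + 1) mod k \<and> u = x1 i)"
  unfolding b_mate_def by auto

text \<open>Stated with Suc j mod k, the simp normal form of (j + 1) mod k.\<close>

lemma mate_values:
  assumes "j < k" "r < 6"
  shows "a_mate j r = Old j (y0 j) \<longleftrightarrow> y_end j r = 0"
    "a_mate j r = Old (Suc j mod k) (x0 (Suc j mod k)) \<longleftrightarrow> x_end j r = 0"
    "a_mate j r = Cv j \<longleftrightarrow> y_end j r \<noteq> 0 \<and> x_end j r \<noteq> 0"
    "b_mate j r = Old j (y1 j) \<longleftrightarrow> y_end j r = 1"
    "b_mate j r = Old (Suc j mod k) (x1 (Suc j mod k)) \<longleftrightarrow> x_end j r = 1"
    "b_mate j r = Cv j \<longleftrightarrow> y_end j r \<noteq> 1 \<and> x_end j r \<noteq> 1"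
  using next_index_ne[OF assms(1)] y_end_ne_x_end[OF assms] unfolding a_mate_def b_mate_def by auto

lemma old_edge_vertices: "e \<in> old_edges r \<Longrightarrow> v \<in> e \<Longrightarrow> \<exists>i u. v = Old i u"
  unfolding old_edges_def by auto

lemma gadget_edge_vertices: "e \<in> gadget_edges r \<Longrightarrow> \<exists>j. Av j \<in> e \<or> Bv j \<in> e"
  unfolding gadget_edges_def by auto

lemma glued_matching_Av:
  assumes "Av j \<in> e"
  shows "e \<in> glued_matching r \<longleftrightarrow> j < k \<and> e = {Av j, a_mate j r}"
proof -
  have "e \<notin> old_edges r" "e \<notin> tree_edges (r div 2)"
    using assms by (auto dest: old_edge_vertices tree_edge_vertices)
  moreover have "e \<in> gadget_edges r \<longleftrightarrow> j < k \<and> e = {Av j, a_mate j r}"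
    using assms mates_not_Av_Bv mates_not_Av_Bv[symmetric] unfolding gadget_edges_def by auto
  ultimately show ?thesis unfolding glued_matching_def by blast
qed

lemma glued_matching_Bv:
  assumes "Bv j \<in> e"
  shows "e \<in> glued_matching r \<longleftrightarrow> j < k \<and> e = {Bv j, b_mate j r}"
proof -
  have "e \<notin> old_edges r" "e \<notin> tree_edges (r div 2)"
    using assms by (auto dest: old_edge_vertices tree_edge_vertices)
  moreover have "e \<in> gadget_edges r \<longleftrightarrow> j < k \<and> e = {Bv j, b_mate j r}"
    using assms mates_not_Av_Bv mates_not_Av_Bv[symmetric] unfolding gadget_edges_def by auto
  ultimately show ?thesis unfolding glued_matching_def by blast
qed

lemma glued_matching_Pv:
  assumes "Pv m \<in> e"
  shows "e \<in> glued_matching r \<longleftrightarrow> e \<in> tree_edges (r div 2)"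
proof -
  have "e \<notin> old_edges r" using assms by (auto dest: old_edge_vertices)
  moreover have "e \<notin> gadget_edges r"
    using assms mates_not_Av_Bv mates_not_Av_Bv[symmetric] unfolding gadget_edges_def by auto
  ultimately show ?thesis unfolding glued_matching_def by blast
qed

lemma gadget_edges_at_Cv:
  assumes "Cv j \<in> e"
  shows "e \<in> gadget_edges r \<longleftrightarrow> (j < k \<and> y_end j r \<noteq> 0 \<and> x_end j r \<noteq> 0 \<and> e = {Av j, Cv j})
    \<or> (j < k \<and> y_end j r \<noteq> 1 \<and> x_end j r \<noteq> 1 \<and> e = {Bv j, Cv j})"
proof
  assume "e \<in> gadget_edges r"
  then obtain j' where "j' < k" "e = {Av j', a_mate j' r} \<or> e = {Bv j', b_mate j' r}"
    unfolding gadget_edges_def by blast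
  then show "(j < k \<and> y_end j r \<noteq> 0 \<and> x_end j r \<noteq> 0 \<and> e = {Av j, Cv j})
    \<or> (j < k \<and> y_end j r \<noteq> 1 \<and> x_end j r \<noteq> 1 \<and> e = {Bv j, Cv j})"
  proof (elim disjE)
    assume e: "e = {Av j', a_mate j' r}"
    then have mate: "Cv j = a_mate j' r" using assms by auto
    then have "j' = j" "y_end j r \<noteq> 0" "x_end j r \<noteq> 0" by (simp_all add: Cv_eq_mate)
    moreover have "e = {Av j, Cv j}" using e mate \<open>j' = j\<close> by simp
    ultimately show ?thesis using \<open>j' < k\<close> by blast
  next
    assume e: "e = {Bv j', b_mate j' r}"
    then have mate: "Cv j = b_mate j' r" using assms by auto
    then have "j' = j" "y_end j r \<noteq> 1" "x_end j r \<noteq> 1" by (simp_all add: Cv_eq_mate)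
    moreover have "e = {Bv j, Cv j}" using e mate \<open>j' = j\<close> by simp
    ultimately show ?thesis using \<open>j' < k\<close> by blast
  qed
next
  assume "(j < k \<and> y_end j r \<noteq> 0 \<and> x_end j r \<noteq> 0 \<and> e = {Av j, Cv j})
    \<or> (j < k \<and> y_end j r \<noteq> 1 \<and> x_end j r \<noteq> 1 \<and> e = {Bv j, Cv j})"
  then show "e \<in> gadget_edges r"
  proof (elim disjE conjE)
    assume "j < k" "y_end j r \<noteq> 0" "x_end j r \<noteq> 0" "e = {Av j, Cv j}"
    then have "e = {Av j, a_mate j r}" using Cv_eq_mate(1)[of j j r] by simp
    moreover have "{Av j, a_mate j r} \<in> gadget_edges r" using \<open>j < k\<close> unfolding gadget_edges_def by blast
    ultimately show ?thesis by simp
  next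
    assume "j < k" "y_end j r \<noteq> 1" "x_end j r \<noteq> 1" "e = {Bv j, Cv j}"
    then have "e = {Bv j, b_mate j r}" using Cv_eq_mate(2)[of j j r] by simp
    moreover have "{Bv j, b_mate j r} \<in> gadget_edges r" using \<open>j < k\<close> unfolding gadget_edges_def by blast
    ultimately show ?thesis by simp
  qed
qed

lemma glued_matching_Cv:
  assumes "Cv j \<in> e"
  shows "e \<in> glued_matching r \<longleftrightarrow> (j < k \<and> y_end j r \<noteq> 0 \<and> x_end j r \<noteq> 0 \<and> e = {Av j, Cv j})
    \<or> (j < k \<and> y_end j r \<noteq> 1 \<and> x_end j r \<noteq> 1 \<and> e = {Bv j, Cv j}) \<or> e \<in> tree_edges (r div 2)"
proof -
  have "e \<notin> old_edges r" using assms by (auto dest: old_edge_vertices)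
  then show ?thesis using gadget_edges_at_Cv[OF assms] unfolding glued_matching_def by simp
qed

lemma Pv_unique:
  assumes "m < k - 2" "r < 6"
  shows "\<exists>!e. e \<in> glued_matching r \<and> Pv m \<in> e"
proof -
  have "(e \<in> glued_matching r \<and> Pv m \<in> e) \<longleftrightarrow> (e \<in> tree_edges (r div 2) \<and> Pv m \<in> e)" for e
    using glued_matching_Pv by blast
  moreover have "\<exists>!e. e \<in> (tree_edges (r div 2) :: 'a mvert set set) \<and> Pv m \<in> e"
    using assms by (intro tree_edges_Pv) auto
  ultimately show ?thesis by simp
qed

lemma Cv_unique:
  assumes j: "j < k" and r: "r < 6"
  shows "\<exists>!e. e \<in> glued_matching r \<and> Cv j \<in> e"
proof -
  let ?T = "tree_edges (r div 2) :: 'a mvert set set"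
  have ne: "y_end j r \<noteq> x_end j r" and le: "y_end j r \<le> 2" "x_end j r \<le> 2"
    using y_end_ne_x_end[OF j r] ends_le_two[OF r] by auto
  have tree: "(\<exists>e\<in>?T. Cv j \<in> e) \<longleftrightarrow> y_end j r \<noteq> 2 \<and> x_end j r \<noteq> 2"
    using r j planned_ends_avoid_xy_iff[OF j r, symmetric] by (simp add: tree_edges_Cv(1) y_end_def x_end_def)
  have edges: "(e \<in> glued_matching r \<and> Cv j \<in> e) \<longleftrightarrow>
      (y_end j r \<noteq> 0 \<and> x_end j r \<noteq> 0 \<and> e = {Av j, Cv j}) \<or> (y_end j r \<noteq> 1 \<and> x_end j r \<noteq> 1 \<and> e = {Bv j, Cv j})
      \<or> (e \<in> ?T \<and> Cv j \<in> e)" for e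
    using glued_matching_Cv[of j e r] j by auto
  from avoided_value_cases[OF ne le] show ?thesis
  proof (elim disjE)
    assume case_tree: "y_end j r \<noteq> 2 \<and> x_end j r \<noteq> 2 \<and> (y_end j r = 0 \<or> x_end j r = 0) \<and> (y_end j r = 1 \<or> x_end j r = 1)"
    then have at_Cv: "(e \<in> glued_matching r \<and> Cv j \<in> e) \<longleftrightarrow> e \<in> ?T \<and> Cv j \<in> e" for e
      unfolding edges by auto
    have "\<exists>e\<in>?T. Cv j \<in> e" using tree case_tree by simp
    then obtain e0 where e0: "e0 \<in> ?T" "Cv j \<in> e0" by blast
    have unique: "e = e0" if "e \<in> ?T" "Cv j \<in> e" for e
      using r by (intro tree_edges_Cv(2)[OF _ j that(1) e0(1) that(2) e0(2)]) auto
    show ?thesis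
    proof (rule ex1I[of _ e0])
      show "e0 \<in> glued_matching r \<and> Cv j \<in> e0" using at_Cv e0 by blast
      show "e = e0" if "e \<in> glued_matching r \<and> Cv j \<in> e" for e
        using that at_Cv unique by blast
    qed
  next
    assume "y_end j r \<noteq> 1 \<and> x_end j r \<noteq> 1 \<and> (y_end j r = 0 \<or> x_end j r = 0) \<and> \<not> (y_end j r \<noteq> 2 \<and> x_end j r \<noteq> 2)"
    then have "(e \<in> glued_matching r \<and> Cv j \<in> e) \<longleftrightarrow> e = {Bv j, Cv j}" for e
      unfolding edges using tree by auto
    then show ?thesis by simp
  next
    assume "y_end j r \<noteq> 0 \<and> x_end j r \<noteq> 0 \<and> (y_end j r = 1 \<or> x_end j r = 1) \<and> \<not> (y_end j r \<noteq> 2 \<and> x_end j r \<noteq> 2)"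
    then have "(e \<in> glued_matching r \<and> Cv j \<in> e) \<longleftrightarrow> e = {Av j, Cv j}" for e
      unfolding edges using tree by auto
    then show ?thesis by simp
  qed
qed

text \<open>The edge of the r-th glued matching that takes over the edge f of the r-th matching
  of G_i.\<close>

definition lift :: "nat \<Rightarrow> 'a set \<Rightarrow> 'a mvert set" where
  "lift i f = (if f = {x i, x0 i} then {Av (prev i), Old i (x0 i)}
     else if f = {x i, x1 i} then {Bv (prev i), Old i (x1 i)}
     else if f = {y i, y0 i} then {Av i, Old i (y0 i)}
     else if f = {y i, y1 i} then {Bv i, Old i (y1 i)}
     else Old i ` f)"

lemma lift_simps:
  assumes "i < k"
  shows "lift i {x i, x0 i} = {Av (prev i), Old i (x0 i)}" "lift i {x i, x1 i} = {Bv (prev i), Old i (x1 i)}"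
    "lift i {y i, y0 i} = {Av i, Old i (y0 i)}" "lift i {y i, y1 i} = {Bv i, Old i (y1 i)}"
    "x i \<notin> f \<Longrightarrow> y i \<notin> f \<Longrightarrow> lift i f = Old i ` f"
  using ingredient_facts[OF assms] ingredient_ends[OF assms]
  unfolding lift_def by (auto simp: doubleton_eq_iff)

lemma Old_in_lift:
  assumes "u \<in> f" "u \<noteq> x i" "u \<noteq> y i"
  shows "Old i u \<in> lift i f"
proof -
  have "f = {x i, x0 i} \<Longrightarrow> u = x0 i" "f = {x i, x1 i} \<Longrightarrow> u = x1 i"
    "f = {y i, y0 i} \<Longrightarrow> u = y0 i" "f = {y i, y1 i} \<Longrightarrow> u = y1 i"
    using assms by auto
  then show ?thesis using assms(1) unfolding lift_def by simp
qed

lemma edge_cases_at_old_vertex: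
  assumes i: "i < k" and f: "f \<in> E i" "u \<in> f" and u: "u \<noteq> x i" "u \<noteq> y i"
  obtains "f = {x i, x0 i}" | "f = {x i, x1 i}" | "f = {y i, y0 i}" | "f = {y i, y1 i}" | "x i \<notin> f" "y i \<notin> f"
proof -
  have cubic: "cubic (V i) (E i)" using cubic_edge.cubic[OF cubic_edge[OF i]] .
  have yx: "{y i, x i} \<in> E i" using ingredient_facts(1)[OF i] by (simp add: insert_commute)
  note at_x = cubic_edges_at[OF cubic ingredient_facts(2,3,1)[OF i] ingredient_facts(6-8)[OF i]]
  note at_y = cubic_edges_at[OF cubic ingredient_facts(4,5)[OF i] yx ingredient_facts(9-11)[OF i]]
  have "f \<noteq> {x i, y i}" "f \<noteq> {y i, x i}" using f(2) u by auto
  moreover have "x i \<in> f \<Longrightarrow> f \<in> {{x i, x0 i}, {x i, x1 i}, {x i, y i}}" using at_x f(1) by blast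
  moreover have "y i \<in> f \<Longrightarrow> f \<in> {{y i, y0 i}, {y i, y1 i}, {y i, x i}}" using at_y f(1) by blast
  ultimately show ?thesis using that by blast
qed

lemma mates_at_cover_edges:
  assumes i: "i < k" and r: "r < 6"
  shows "{x i, x0 i} \<in> cover_matching i r \<Longrightarrow> a_mate (prev i) r = Old i (x0 i)"
    and "{x i, x1 i} \<in> cover_matching i r \<Longrightarrow> b_mate (prev i) r = Old i (x1 i)"
    and "{y i, y0 i} \<in> cover_matching i r \<Longrightarrow> a_mate i r = Old i (y0 i)"
    and "{y i, y1 i} \<in> cover_matching i r \<Longrightarrow> b_mate i r = Old i (y1 i)"
proof -
  have prev: "prev i < k" "(prev i + 1) mod k = i" using prev_lt[OF i] next_eq_iff_prev[OF i prev_lt[OF i]] by auto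
  note x_end_prev = x_end_iff[OF prev(1) r prev(2)[symmetric]] and ne = y_end_ne_x_end[OF prev(1) r]
  show "a_mate (prev i) r = Old i (x0 i)" if "{x i, x0 i} \<in> cover_matching i r"
    using that x_end_prev ne unfolding a_mate_def prev(2) by simp
  show "b_mate (prev i) r = Old i (x1 i)" if "{x i, x1 i} \<in> cover_matching i r"
    using that x_end_prev ne unfolding b_mate_def prev(2) by simp
  show "a_mate i r = Old i (y0 i)" if "{y i, y0 i} \<in> cover_matching i r"
    using that y_end_iff[OF i r] unfolding a_mate_def by simp
  show "b_mate i r = Old i (y1 i)" if "{y i, y1 i} \<in> cover_matching i r"
    using that y_end_iff[OF i r] unfolding b_mate_def by simp
qed

lemma lift_in_glued_matching:
  assumes i: "i < k" and r: "r < 6" and f: "f \<in> cover_matching i r" "u \<in> f" and u: "u \<noteq> x i" "u \<noteq> y i"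
  shows "lift i f \<in> glued_matching r"
proof -
  have fE: "f \<in> E i" using cover_matching_perfect[OF i r] f(1) unfolding perfect_matching_def by blast
  note mates = mates_at_cover_edges[OF i r] and prev = prev_lt[OF i]
  from edge_cases_at_old_vertex[OF i fE f(2) u] show ?thesis
  proof cases
    case 1
    then show ?thesis using mates(1) f(1) glued_matching_Av[of "prev i"] prev lift_simps[OF i] by simp
  next
    case 2
    then show ?thesis using mates(2) f(1) glued_matching_Bv[of "prev i"] prev lift_simps[OF i] by simp
  next
    case 3
    then show ?thesis using mates(3) f(1) glued_matching_Av[of i] i lift_simps[OF i] by simp
  next
    case 4
    then show ?thesis using mates(4) f(1) glued_matching_Bv[of i] i lift_simps[OF i] by simp
  next
    case 5
    then have "Old i ` f \<in> old_edges r" using i f(1) unfolding old_edges_def by blast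
    then show ?thesis using 5 lift_simps(5)[OF i] unfolding glued_matching_def by simp
  qed
qed

lemma mate_edge_is_lift:
  assumes i: "i < k" and j: "j < k" and r: "r < 6"
  shows "a_mate j r = Old i u \<Longrightarrow> \<exists>f\<in>cover_matching i r. u \<in> f \<and> {Av j, Old i u} = lift i f"
    and "b_mate j r = Old i u \<Longrightarrow> \<exists>f\<in>cover_matching i r. u \<in> f \<and> {Bv j, Old i u} = lift i f"
proof -
  show "\<exists>f\<in>cover_matching i r. u \<in> f \<and> {Av j, Old i u} = lift i f" if "a_mate j r = Old i u"
  proof -
    from that consider "y_end j r = 0" "i = j" "u = y0 i" | "x_end j r = 0" "j = prev i" "u = x0 i"
      unfolding a_mate_eq_Old using next_eq_iff_prev[OF i j] by auto
    then show ?thesis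
    proof cases
      case 1
      then show ?thesis using y_end_iff[OF i r] lift_simps(3)[OF i] by (intro bexI[of _ "{y i, y0 i}"]) auto
    next
      case 2
      then have "{x i, x0 i} \<in> cover_matching i r" using x_end_iff[OF j r] next_eq_iff_prev[OF i j] by auto
      then show ?thesis using 2 lift_simps(1)[OF i] by (intro bexI[of _ "{x i, x0 i}"]) auto
    qed
  qed
  show "\<exists>f\<in>cover_matching i r. u \<in> f \<and> {Bv j, Old i u} = lift i f" if "b_mate j r = Old i u"
  proof -
    from that consider "y_end j r = 1" "i = j" "u = y1 i" | "x_end j r = 1" "j = prev i" "u = x1 i"
      unfolding b_mate_eq_Old using next_eq_iff_prev[OF i j] by auto
    then show ?thesis
    proof cases
      case 1
      then show ?thesis using y_end_iff[OF i r] lift_simps(4)[OF i] by (intro bexI[of _ "{y i, y1 i}"]) auto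
    next
      case 2
      then have "{x i, x1 i} \<in> cover_matching i r" using x_end_iff[OF j r] next_eq_iff_prev[OF i j] by auto
      then show ?thesis using 2 lift_simps(2)[OF i] by (intro bexI[of _ "{x i, x1 i}"]) auto
    qed
  qed
qed

lemma glued_matching_at_Old:
  assumes i: "i < k" and r: "r < 6" and e: "e \<in> glued_matching r" "Old i u \<in> e"
  shows "\<exists>f\<in>cover_matching i r. u \<in> f \<and> e = lift i f"
proof -
  have "e \<notin> tree_edges (r div 2)" using e(2) by (auto dest: tree_edge_vertices)
  then consider "e \<in> old_edges r" | j where "j < k" "e = {Av j, a_mate j r}" | j where "j < k" "e = {Bv j, b_mate j r}"
    using e(1) unfolding glued_matching_def gadget_edges_def by blast
  then show ?thesis
  proof cases
    case 1
    then obtain i' f where "i' < k" "f \<in> cover_matching i' r" "x i' \<notin> f" "y i' \<notin> f" "e = Old i' ` f"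
      unfolding old_edges_def by blast
    moreover from this have "i' = i" "u \<in> f" using e(2) by auto
    ultimately show ?thesis using lift_simps(5)[OF i] by blast
  next
    case (2 j)
    then have "a_mate j r = Old i u" using e(2) by auto
    with 2 show ?thesis using mate_edge_is_lift(1)[OF i \<open>j < k\<close> r] by simp
  next
    case (3 j)
    then have "b_mate j r = Old i u" using e(2) by auto
    with 3 show ?thesis using mate_edge_is_lift(2)[OF i \<open>j < k\<close> r] by simp
  qed
qed

lemma Old_unique:
  assumes i: "i < k" and r: "r < 6" and u: "u \<in> V i" "u \<noteq> x i" "u \<noteq> y i"
  shows "\<exists>!e. e \<in> glued_matching r \<and> Old i u \<in> e"
proof -
  have pm: "perfect_matching (V i) (E i) (cover_matching i r)" using cover_matching_perfect[OF i r] .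
  obtain f where f: "f \<in> cover_matching i r" "u \<in> f" using perfect_matching_edge_exists[OF pm u(1)] by blast
  show ?thesis
  proof (rule ex1I[of _ "lift i f"])
    show "lift i f \<in> glued_matching r \<and> Old i u \<in> lift i f"
      using lift_in_glued_matching[OF i r f u(2,3)] Old_in_lift[OF f(2) u(2,3)] by blast
    show "e = lift i f" if "e \<in> glued_matching r \<and> Old i u \<in> e" for e
      using glued_matching_at_Old[OF i r] that perfect_matching_edge_unique[OF pm u(1) _ f(1) _ f(2)] by blast
  qed
qed

lemma M_edges_eq:
  "M_edges k E x y x0 x1 y0 y1 =
     (\<Union>i<k. (\<lambda>f. Old i ` f) ` {f \<in> E i. x i \<notin> f \<and> y i \<notin> f})
     \<union> (\<Union>j<k. {{Av j, Old j (y0 j)}, {Av j, Old ((j + 1) mod k) (x0 ((j + 1) mod k))},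
               {Bv j, Old j (y1 j)}, {Bv j, Old ((j + 1) mod k) (x1 ((j + 1) mod k))},
               {Av j, Cv j}, {Bv j, Cv j}})
     \<union> path_edge ` {i. i + 1 < k} \<union> pendant_edge ` {2..<k}"
proof -
  have path: "{{M_path k ! i, M_path k ! (i + 1)} | i. i + 1 < length (M_path k :: 'a mvert list)}
      = path_edge ` {i. i + 1 < k}"
    using two_le_k unfolding path_edge_def by (auto simp: length_M_path)
  have pendant: "{{Cv i, Pv (i - 2)} | i. 2 \<le> i \<and> i < k} = (pendant_edge ` {2..<k} :: 'a mvert set set)"
    unfolding pendant_edge_def by auto
  show ?thesis unfolding M_edges_def path pendant by (rule refl)
qed

lemma glued_matching_subset:
  assumes r: "r < 6"
  shows "glued_matching r \<subseteq> M_edges k E x y x0 x1 y0 y1"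
proof
  fix e assume "e \<in> glued_matching r"
  then consider "e \<in> old_edges r" | j where "j < k" "e = {Av j, a_mate j r} \<or> e = {Bv j, b_mate j r}"
    | "e \<in> tree_edges (r div 2)"
    unfolding glued_matching_def gadget_edges_def by blast
  then show "e \<in> M_edges k E x y x0 x1 y0 y1"
  proof cases
    case 1
    then obtain i f where "i < k" "f \<in> cover_matching i r" "x i \<notin> f" "y i \<notin> f" "e = Old i ` f"
      unfolding old_edges_def by blast
    moreover from this have "f \<in> E i" using cover_matching_perfect[OF _ r] unfolding perfect_matching_def by blast
    ultimately show ?thesis unfolding M_edges_eq by blast
  next
    case (2 j)
    then have "e \<in> {{Av j, Old j (y0 j)}, {Av j, Old ((j + 1) mod k) (x0 ((j + 1) mod k))},
               {Bv j, Old j (y1 j)}, {Bv j, Old ((j + 1) mod k) (x1 ((j + 1) mod k))},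
               {Av j, Cv j}, {Bv j, Cv j}}"
      unfolding a_mate_def b_mate_def by (elim disjE) simp_all
    then show ?thesis using \<open>j < k\<close> unfolding M_edges_eq by blast
  next
    case 3
    then have "e \<in> path_edge ` {i. i + 1 < k} \<union> pendant_edge ` {2..<k}"
      unfolding tree_edges_def by (auto split: if_splits)
    then show ?thesis unfolding M_edges_eq by blast
  qed
qed

lemma glued_matching_perfect:
  assumes r: "r < 6"
  shows "perfect_matching (M_vertices k V x y) (M_edges k E x y x0 x1 y0 y1) (glued_matching r)"
  unfolding perfect_matching_def
proof (intro conjI ballI)
  show "glued_matching r \<subseteq> M_edges k E x y x0 x1 y0 y1" using glued_matching_subset[OF r] .
  fix v assume "v \<in> M_vertices k V x y"
  then consider i u where "i < k" "u \<in> V i" "u \<noteq> x i" "u \<noteq> y i" "v = Old i u" | j where "j < k" "v = Av j"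
    | j where "j < k" "v = Bv j" | j where "j < k" "v = Cv j" | m where "m < k - 2" "v = Pv m"
    unfolding M_vertices_def by blast
  then show "\<exists>!e. e \<in> glued_matching r \<and> v \<in> e"
  proof cases
    case 1
    then show ?thesis using Old_unique[OF _ r] by blast
  next
    case (2 j)
    then have "(e \<in> glued_matching r \<and> v \<in> e) \<longleftrightarrow> e = {Av j, a_mate j r}" for e
      using glued_matching_Av[of j e r] by auto
    then show ?thesis by simp
  next
    case (3 j)
    then have "(e \<in> glued_matching r \<and> v \<in> e) \<longleftrightarrow> e = {Bv j, b_mate j r}" for e
      using glued_matching_Bv[of j e r] by auto
    then show ?thesis by simp
  next
    case 4
    then show ?thesis using Cv_unique[OF _ r] by blast
  next
    case 5
    then show ?thesis using Pv_unique[OF _ r] by blast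
  qed
qed

lemma old_edge_in_glued_matching_iff:
  assumes i: "i < k" and f: "f \<in> E i" "x i \<notin> f" "y i \<notin> f"
  shows "Old i ` f \<in> glued_matching r \<longleftrightarrow> f \<in> cover_matching i r"
proof
  assume "f \<in> cover_matching i r"
  then show "Old i ` f \<in> glued_matching r" using i f unfolding glued_matching_def old_edges_def by blast
next
  assume e: "Old i ` f \<in> glued_matching r"
  obtain u where u: "u \<in> f" using f(1) ingredient_facts(12)[OF i] unfolding graph_def by blast
  have "Old i ` f \<notin> gadget_edges r" using gadget_edge_vertices by fastforce
  moreover have "Old i ` f \<notin> tree_edges (r div 2)" using u by (auto dest: tree_edge_vertices)
  ultimately have "Old i ` f \<in> old_edges r" using e unfolding glued_matching_def by blast
  then obtain i' f' where f': "f' \<in> cover_matching i' r" "Old i ` f = Old i' ` f'"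
    unfolding old_edges_def by blast
  moreover from this have "i' = i" using u by (metis image_eqI imageE mvert.inject(1))
  ultimately show "f \<in> cover_matching i r" by (simp add: inj_image_eq_iff inj_def)
qed

lemma tree_edge_in_glued_matching_iff:
  assumes "e \<in> path_edge ` {i. i + 1 < k} \<union> pendant_edge ` {2..<k}"
  shows "e \<in> glued_matching r \<longleftrightarrow> e \<in> tree_edges (r div 2)"
proof -
  obtain c0 where "c0 < 3" "e \<in> tree_edges c0" using tree_edge_class[OF assms] by metis
  then have tree_vertex: "\<exists>j. v = Cv j \<or> v = Pv j" if "v \<in> e" for v
    using that tree_edge_vertices by blast
  obtain v where "v \<in> e" using assms unfolding path_edge_def pendant_edge_def by blast
  have "e \<notin> gadget_edges r" using tree_vertex by (fastforce dest: gadget_edge_vertices)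
  moreover have "e \<notin> old_edges r" using tree_vertex \<open>v \<in> e\<close> by (fastforce dest: old_edge_vertices)
  ultimately show ?thesis unfolding glued_matching_def by blast
qed

lemma Av_edge_in_glued_matching_iff:
  "j < k \<Longrightarrow> {Av j, w} \<in> glued_matching r \<longleftrightarrow> a_mate j r = w"
  using glued_matching_Av[of j "{Av j, w}" r] mates_not_Av_Bv(1)[of j r j] by (auto simp: doubleton_eq_iff)

lemma Bv_edge_in_glued_matching_iff:
  "j < k \<Longrightarrow> {Bv j, w} \<in> glued_matching r \<longleftrightarrow> b_mate j r = w"
  using glued_matching_Bv[of j "{Bv j, w}" r] mates_not_Av_Bv(4)[of j r j] by (auto simp: doubleton_eq_iff)

lemma gadget_edge_count:
  assumes j: "j < k"
  shows "card {r. r < 6 \<and> {Av j, Old j (y0 j)} \<in> glued_matching r} = 2"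
    "card {r. r < 6 \<and> {Av j, Old ((j + 1) mod k) (x0 ((j + 1) mod k))} \<in> glued_matching r} = 2"
    "card {r. r < 6 \<and> {Av j, Cv j} \<in> glued_matching r} = 2"
    "card {r. r < 6 \<and> {Bv j, Old j (y1 j)} \<in> glued_matching r} = 2"
    "card {r. r < 6 \<and> {Bv j, Old ((j + 1) mod k) (x1 ((j + 1) mod k))} \<in> glued_matching r} = 2"
    "card {r. r < 6 \<and> {Bv j, Cv j} \<in> glued_matching r} = 2"
proof -
  note A = Av_edge_in_glued_matching_iff[OF j] and B = Bv_edge_in_glued_matching_iff[OF j]
    and mv = mate_values[OF j]
  have neither: "card {r. r < 6 \<and> y_end j r \<noteq> v \<and> x_end j r \<noteq> v} = 2" if "v < 2" for v
    using card_neither_of_disjoint[of 6 "\<lambda>r. y_end j r = v" "\<lambda>r. x_end j r = v"]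
      y_end_ne_x_end[OF j] card_y_end[OF j that] card_x_end[OF j that] by fastforce
  show "card {r. r < 6 \<and> {Av j, Old j (y0 j)} \<in> glued_matching r} = 2"
    using card_y_end[OF j, of 0] by (simp add: A mv cong: conj_cong)
  show "card {r. r < 6 \<and> {Av j, Old ((j + 1) mod k) (x0 ((j + 1) mod k))} \<in> glued_matching r} = 2"
    using card_x_end[OF j, of 0] by (simp add: A mv cong: conj_cong)
  show "card {r. r < 6 \<and> {Av j, Cv j} \<in> glued_matching r} = 2"
    using neither[of 0] by (simp add: A mv cong: conj_cong)
  show "card {r. r < 6 \<and> {Bv j, Old j (y1 j)} \<in> glued_matching r} = 2"
    using card_y_end[OF j, of 1] by (simp add: B mv cong: conj_cong)
  show "card {r. r < 6 \<and> {Bv j, Old ((j + 1) mod k) (x1 ((j + 1) mod k))} \<in> glued_matching r} = 2"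
    using card_x_end[OF j, of 1] by (simp add: B mv cong: conj_cong)
  show "card {r. r < 6 \<and> {Bv j, Cv j} \<in> glued_matching r} = 2"
    using neither[of 1] by (simp add: B mv cong: conj_cong)
qed

lemma glued_edge_count:
  assumes e: "e \<in> M_edges k E x y x0 x1 y0 y1"
  shows "card {r. r < 6 \<and> e \<in> glued_matching r} = 2"
proof -
  have "e \<in> (\<Union>i<k. (\<lambda>f. Old i ` f) ` {f \<in> E i. x i \<notin> f \<and> y i \<notin> f})
    \<or> e \<in> (\<Union>j<k. {{Av j, Old j (y0 j)}, {Av j, Old ((j + 1) mod k) (x0 ((j + 1) mod k))},
               {Bv j, Old j (y1 j)}, {Bv j, Old ((j + 1) mod k) (x1 ((j + 1) mod k))},
               {Av j, Cv j}, {Bv j, Cv j}})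
    \<or> e \<in> path_edge ` {i. i + 1 < k} \<union> pendant_edge ` {2..<k}"
    using e unfolding M_edges_eq by (simp only: Un_iff disj_assoc)
  then show ?thesis
  proof (elim disjE)
    assume "e \<in> (\<Union>i<k. (\<lambda>f. Old i ` f) ` {f \<in> E i. x i \<notin> f \<and> y i \<notin> f})"
    then obtain i f where f: "i < k" "f \<in> E i" "x i \<notin> f" "y i \<notin> f" "e = Old i ` f" by blast
    then have "{r. r < 6 \<and> e \<in> glued_matching r} = {r. r < 6 \<and> f \<in> cover_matching i r}"
      using old_edge_in_glued_matching_iff[OF f(1-4)] by simp
    then show ?thesis using cover_matching_count[OF f(1,2)] by simp
  next
    assume "e \<in> (\<Union>j<k. {{Av j, Old j (y0 j)}, {Av j, Old ((j + 1) mod k) (x0 ((j + 1) mod k))},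
               {Bv j, Old j (y1 j)}, {Bv j, Old ((j + 1) mod k) (x1 ((j + 1) mod k))},
               {Av j, Cv j}, {Bv j, Cv j}})"
    then obtain j where "j < k" "e \<in> {{Av j, Old j (y0 j)}, {Av j, Old ((j + 1) mod k) (x0 ((j + 1) mod k))},
               {Bv j, Old j (y1 j)}, {Bv j, Old ((j + 1) mod k) (x1 ((j + 1) mod k))},
               {Av j, Cv j}, {Bv j, Cv j}}" by blast
    then show ?thesis using gadget_edge_count[OF \<open>j < k\<close>] by auto
  next
    assume 3: "e \<in> path_edge ` {i. i + 1 < k} \<union> pendant_edge ` {2..<k}"
    then show ?thesis using tree_edge_count[OF 3] tree_edge_in_glued_matching_iff[OF 3] by (simp cong: conj_cong)
  qed
qed

end

theorem theorem1p3:
  fixes k :: nat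
    and V :: "nat \<Rightarrow> 'a set" and E :: "nat \<Rightarrow> 'a set set"
    and x y x0 x1 y0 y1 :: "nat \<Rightarrow> 'a"
  assumes "k \<ge> 3"
    and "\<And>i. i < k \<Longrightarrow> M_ingredient (V i) (E i) (x i) (y i) (x0 i) (x1 i) (y0 i) (y1 i)"
  shows "has_fulkerson_cover (M_vertices k V x y) (M_edges k E x y x0 x1 y0 y1)"
proof -
  interpret ingredients k V E x y x0 x1 y0 y1
    using assms by unfold_locales
  show ?thesis
    unfolding has_fulkerson_cover_def
    using fulkerson_coverI[OF glued_matching_perfect glued_edge_count] by blast
qed

end
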